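(* Consider the multi-machine power system in the context, with $\omega_0>0$, $i_r^*\in\mathbb{R}^n_{>0}$, and a set-point $\theta_{\mathsf{dq}}\in\mathbb{T}^n$. The unique control action $u=u^*(\theta_{\mathsf{dq}})=(u_m^*,u_r^* )$ which renders $\Gamma|_{\theta_{\mathsf{dq}}}$ invariant is given by $$u_r^*(\theta_{\mathsf{dq}})=R_r i_r^*,\qquad u_m^*(\theta_{\mathsf{dq}})=\big(D+\mathcal{K}_{\mathsf{net}}(\theta_{\mathsf{dq}})\big)\omega_0\mathbb{1},$$ where $\mathcal{K}_{\mathsf{net}}(\theta_{\mathsf{dq}})=I_r^*(L_m\otimes\mathsf{e}_2^\top)\mathbf{R}_{\theta_{\mathsf{dq}}}^\top\mathbf{Y}_{\mathsf{net}}\mathbf{R}_{\theta_{\mathsf{dq}}}(L_m\otimes\mathsf{e}_2)I_r^*$ and $\mathbf{Y}_{\mathsf{net}}=\big(Z_s+(Y_{\mathsf c}+\mathcal{L}_{\mathsf t})^{-1}\big)^{-1}$ is the equivalent admittance of the three-phase electrical subsystem.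
   Context: Notation: $j=\begin{bsmallmatrix}0&-1\\1&0\end{bsmallmatrix}$, $I_2$ the $2\times2$ identity, $\mathsf{e}_1=(1,0)^\top$, $\mathsf{e}_2=(0,1)^\top$, $\mathbb{1}\in\mathbb{R}^n$ the all-ones vector, $\otimes$ the Kronecker product, $\boldsymbol{j}=I\otimes j$. For $\theta\in\mathbb{T}^n$, $R_{\theta_i}$ is the $2\times 2$ rotation by $\theta_i$ and $\mathbf{R}_\theta=\mathrm{blkdiag}(R_{\theta_1},\dots,R_{\theta_n})$. System: $n$ machines, $m$ lines, connected undirected graph with signed incidence matrix $E\in\mathbb{R}^{n\times m}$, $\mathbf{E}=E\otimes I_2$. Parameters (all scalar entries positive): $M,D,R_r,L_r,L_m$ diagonal $n\times n$; $R_s,L_s,C,G$ of the form $\mathrm{diag}(\cdot)\otimes I_2$ in $\mathbb{R}^{2n\times2n}$; $L_{\mathsf t},R_{\mathsf t}$ of the form $\mathrm{diag}(\cdot)\otimes I_2$ in $\mathbb{R}^{2m\times 2m}$; $L_{s_i}L_{r_i}-L_{m_i}^2>0$. State $x=(M\omega,\theta,\lambda_r,\lambda_s,Cv,L_{\mathsf t}i_{\mathsf t})\in\mathcal{X}=\mathbb{R}^n\times\mathbb{T}^n\times\mathbb{R}^n\times\mathbb{R}^{2n}\times\mathbb{R}^{2n}\times\mathbb{R}^{2m}$, input $u=(u_m,u_r)$. Currents are defined by $\lambda_s=L_s i_s+\mathbf{R}_\theta(L_m\otimes\mathsf{e}_1)i_r$, $\lambda_r=L_r i_r+(L_m\otimes\mathsf{e}_1^\top)\mathbf{R}_\theta^\top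 i_s$; $\tau_e=-I_r(L_m\otimes\mathsf{e}_2^\top)\mathbf{R}_\theta^\top i_s$, $I_r=\mathrm{diag}(i_{r_i})$. Dynamics: $M\dot\omega=-D\omega-\tau_e+u_m$, $\dot\theta=\omega$, $\dot\lambda_r=-R_r i_r+u_r$, $\dot\lambda_s=-R_s i_s+v$, $C\dot v=-Gv-\mathbf{E}i_{\mathsf t}-i_s$, $L_{\mathsf t}\tfrac{d}{dt}i_{\mathsf t}=-R_{\mathsf t}i_{\mathsf t}+\mathbf{E}^\top v$. Further definitions: $I_r^*=\mathrm{diag}(i^*_{r_i})$; $\Omega=\{x: i_r=i_r^*,\ \omega=\omega_0\mathbb{1}\}$; $Z_s=R_s+\boldsymbol{j}\omega_0L_s$, $Y_{\mathsf c}=G+\boldsymbol{j}\omega_0C$, $Z_{\mathsf t}=R_{\mathsf t}+\boldsymbol{j}\omega_0L_{\mathsf t}$, $\mathcal{L}_{\mathsf t}=\mathbf{E}Z_{\mathsf t}^{-1}\mathbf{E}^\top$; $\mathbf{\Pi}=\begin{bsmallmatrix}-\mathbf{Y}_{\mathsf{net}}\\ (Y_{\mathsf c}+\mathcal{L}_{\mathsf t})^{-1}\mathbf{Y}_{\mathsf{net}}\\ Z_{\mathsf t}^{-1}\mathbf{E}^\top(Y_{\mathsf c}+\mathcal{L}_{\mathsf t})^{-1}\mathbf{Y}_{\mathsf{net}}\end{bsmallmatrix}$; network flow map $\hat\pi:\mathbb{T}^n\to\mathbb{R}^{4n+2m}$, $\hat\pi(\theta)=\mathbf{\Pi}\mathbf{R}_\theta(L_m\otimes\mathsf{e}_2)i_r^*\omega_0$.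 The diagonal fiber through $\theta_{\mathsf{dq}}$ is $\mathbb{F}|_{\theta_{\mathsf{dq}}}=\{\theta=\omega_0\mathbb{1}s+\theta_{\mathsf{dq}}: s\in[0,2\pi/\omega_0)\}\subset\mathbb{T}^n$, and $\Gamma|_{\theta_{\mathsf{dq}}}=\{x\in\Omega:(i_s,v,i_{\mathsf t})\in\hat\pi(\mathbb{F}|_{\theta_{\mathsf{dq}}})\}$. *)

theory Defs
  imports "HOL-Analysis.Analysis"
begin

definition diagm :: "real^'n \<Rightarrow> real^'n^'n" where
  "diagm d = (\<chi> i j. if i = j then d$i else 0)"

text \<open>Kronecker product, index (i,k) with i outer, k inner (as for E \<otimes> I_2).\<close>
definition kron :: "real^'b^'a \<Rightarrow> real^'d^'c \<Rightarrow> real^('b\<times>'d)^('a\<times>'c)" where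
  "kron A B = (\<chi> p q. A$(fst p)$(fst q) * B$(snd p)$(snd q))"

text \<open>A \<otimes> v (v a column vector) and A \<otimes> v^T (v^T a row vector).\<close>
definition kron_col :: "real^'b^'a \<Rightarrow> real^'c \<Rightarrow> real^'b^('a\<times>'c)" where
  "kron_col A v = (\<chi> p j. A$(fst p)$j * v$(snd p))"

definition kron_row :: "real^'b^'a \<Rightarrow> real^'c \<Rightarrow> real^('b\<times>'c)^'a" where
  "kron_row A v = (\<chi> i q. A$i$(fst q) * v$(snd q))"

definition I2 :: "real^2^2" where "I2 = mat 1"
definition jmat :: "real^2^2" where "jmat = vector [vector [0, -1], vector [1, 0]]"
definition e1 :: "real^2" where "e1 = vector [1, 0]"
definition e2 :: "real^2" where "e2 = vector [0, 1]"

definition rot :: "real \<Rightarrow> real^2^2" where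
  "rot t = vector [vector [cos t, - sin t], vector [sin t, cos t]]"

definition blkrot :: "real^'n \<Rightarrow> real^('n\<times>2)^('n\<times>2)" where
  "blkrot \<theta> = (\<chi> p q. if fst p = fst q then rot (\<theta>$(fst p)) $ (snd p) $ (snd q) else 0)"

definition bj :: "real^('n::finite\<times>2)^('n\<times>2)" where
  "bj = kron (mat 1) jmat"

definition torus_eq :: "real^'n \<Rightarrow> real^'n \<Rightarrow> bool" where
  "torus_eq a b \<longleftrightarrow> (\<forall>i. \<exists>k::int. a$i - b$i = 2 * pi * of_int k)"

text \<open>Diagonal entries of M, D, R_r, L_r, L_m, R_s, L_s, C, G (per machine),
  of L_t, R_t (per line), and the signed incidence matrix E.\<close>
record ('n, 'm) mparams =
  pM :: "real^'n::finite"
  pD :: "real^'n"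
  pRr :: "real^'n"
  pLr :: "real^'n"
  pLm :: "real^'n"
  pRs :: "real^'n"
  pLs :: "real^'n"
  pC :: "real^'n"
  pG :: "real^'n"
  pLt :: "real^'m::finite"
  pRt :: "real^'m"
  pE :: "real^'m^'n"

definition signed_incidence :: "real^'m^'n \<Rightarrow> bool" where
  "signed_incidence E \<longleftrightarrow> (\<forall>e. \<exists>a b. a \<noteq> b \<and> E$a$e = 1 \<and> E$b$e = -1 \<and>
      (\<forall>k. k \<noteq> a \<and> k \<noteq> b \<longrightarrow> E$k$e = 0))"

definition inc_connected :: "real^'m^'n \<Rightarrow> bool" where
  "inc_connected E \<longleftrightarrow> (\<forall>a b. (\<lambda>x y. x \<noteq> y \<and> (\<exists>e. E$x$e \<noteq> 0 \<and> E$y$e \<noteq> 0))\<^sup>*\<^sup>* a b)"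

definition valid_params :: "('n::finite, 'm::finite) mparams \<Rightarrow> bool" where
  "valid_params P \<longleftrightarrow>
     (\<forall>i. pM P $ i > 0 \<and> pD P $ i > 0 \<and> pRr P $ i > 0 \<and> pLr P $ i > 0 \<and> pLm P $ i > 0 \<and>
          pRs P $ i > 0 \<and> pLs P $ i > 0 \<and> pC P $ i > 0 \<and> pG P $ i > 0 \<and>
          pLs P $ i * pLr P $ i - (pLm P $ i)^2 > 0) \<and>
     (\<forall>e. pLt P $ e > 0 \<and> pRt P $ e > 0) \<and>
     signed_incidence (pE P) \<and> inc_connected (pE P)"

definition RsM :: "('n::finite, 'm::finite) mparams \<Rightarrow> real^('n\<times>2)^('n\<times>2)" where
  "RsM P = kron (diagm (pRs P)) I2"
definition LsM :: "('n::finite, 'm::finite) mparams \<Rightarrow> real^('n\<times>2)^('n\<times>2)" where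
  "LsM P = kron (diagm (pLs P)) I2"
definition CM :: "('n::finite, 'm::finite) mparams \<Rightarrow> real^('n\<times>2)^('n\<times>2)" where
  "CM P = kron (diagm (pC P)) I2"
definition GM :: "('n::finite, 'm::finite) mparams \<Rightarrow> real^('n\<times>2)^('n\<times>2)" where
  "GM P = kron (diagm (pG P)) I2"
definition LtM :: "('n::finite, 'm::finite) mparams \<Rightarrow> real^('m\<times>2)^('m\<times>2)" where
  "LtM P = kron (diagm (pLt P)) I2"
definition RtM :: "('n::finite, 'm::finite) mparams \<Rightarrow> real^('m\<times>2)^('m\<times>2)" where
  "RtM P = kron (diagm (pRt P)) I2"
definition EM :: "('n::finite, 'm::finite) mparams \<Rightarrow> real^('m\<times>2)^('n\<times>2)" where
  "EM P = kron (pE P) I2"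

definition Zs :: "('n::finite, 'm::finite) mparams \<Rightarrow> real \<Rightarrow> real^('n\<times>2)^('n\<times>2)" where
  "Zs P \<omega>0 = RsM P + \<omega>0 *\<^sub>R (bj ** LsM P)"
definition Yc :: "('n::finite, 'm::finite) mparams \<Rightarrow> real \<Rightarrow> real^('n\<times>2)^('n\<times>2)" where
  "Yc P \<omega>0 = GM P + \<omega>0 *\<^sub>R (bj ** CM P)"
definition Zt :: "('n::finite, 'm::finite) mparams \<Rightarrow> real \<Rightarrow> real^('m\<times>2)^('m\<times>2)" where
  "Zt P \<omega>0 = RtM P + \<omega>0 *\<^sub>R (bj ** LtM P)"
definition Lnet :: "('n::finite, 'm::finite) mparams \<Rightarrow> real \<Rightarrow> real^('n\<times>2)^('n\<times>2)" where
  "Lnet P \<omega>0 = EM P ** matrix_inv (Zt P \<omega>0) ** transpose (EM P)"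
definition Ynet :: "('n::finite, 'm::finite) mparams \<Rightarrow> real \<Rightarrow> real^('n\<times>2)^('n\<times>2)" where
  "Ynet P \<omega>0 = matrix_inv (Zs P \<omega>0 + matrix_inv (Yc P \<omega>0 + Lnet P \<omega>0))"

text \<open>Network flow map: returns (i_s, v, i_t).\<close>
definition pihat :: "('n::finite, 'm::finite) mparams \<Rightarrow> real \<Rightarrow> real^'n \<Rightarrow> real^'n
     \<Rightarrow> (real^('n\<times>2)) \<times> (real^('n\<times>2)) \<times> (real^('m\<times>2))" where
  "pihat P \<omega>0 irs \<theta> =
    (let w = \<omega>0 *\<^sub>R (blkrot \<theta> *v (kron_col (diagm (pLm P)) e2 *v irs));
         Y = Ynet P \<omega>0;
         W = matrix_inv (Yc P \<omega>0 + Lnet P \<omega>0)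
     in (- (Y *v w), W *v (Y *v w),
         matrix_inv (Zt P \<omega>0) *v (transpose (EM P) *v (W *v (Y *v w)))))"

definition Knet :: "('n::finite, 'm::finite) mparams \<Rightarrow> real \<Rightarrow> real^'n \<Rightarrow> real^'n \<Rightarrow> real^'n^'n" where
  "Knet P \<omega>0 irs \<theta>dq =
     diagm irs ** kron_row (diagm (pLm P)) e2 ** transpose (blkrot \<theta>dq) ** Ynet P \<omega>0
       ** blkrot \<theta>dq ** kron_col (diagm (pLm P)) e2 ** diagm irs"

definition flux_ok :: "('n::finite, 'm::finite) mparams \<Rightarrow> real^'n \<Rightarrow> real^'n \<Rightarrow> real^('n\<times>2)
     \<Rightarrow> real^'n \<Rightarrow> real^('n\<times>2) \<Rightarrow> bool" where
  "flux_ok P \<theta> ir is lr ls \<longleftrightarrow>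
     ls = LsM P *v is + blkrot \<theta> *v (kron_col (diagm (pLm P)) e1 *v ir) \<and>
     lr = diagm (pLr P) *v ir + kron_row (diagm (pLm P)) e1 *v (transpose (blkrot \<theta>) *v is)"

definition tau_e :: "('n::finite, 'm::finite) mparams \<Rightarrow> real^'n \<Rightarrow> real^'n \<Rightarrow> real^('n\<times>2) \<Rightarrow> real^'n" where
  "tau_e P \<theta> ir is = - (diagm ir *v (kron_row (diagm (pLm P)) e2 *v (transpose (blkrot \<theta>) *v is)))"

text \<open>State: (om, th, lr, ls, v, it) (om, v, it stand for the states M om, C v, L_t i_t,
  M, C, L_t being invertible); ir, is are the currents determined by the flux relations.\<close>
definition is_solution :: "('n::finite, 'm::finite) mparams \<Rightarrow> (real^'n) \<times> (real^'n) \<Rightarrow> real set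
    \<Rightarrow> (real \<Rightarrow> real^'n) \<Rightarrow> (real \<Rightarrow> real^'n) \<Rightarrow> (real \<Rightarrow> real^'n) \<Rightarrow> (real \<Rightarrow> real^('n\<times>2))
    \<Rightarrow> (real \<Rightarrow> real^('n\<times>2)) \<Rightarrow> (real \<Rightarrow> real^('m\<times>2)) \<Rightarrow> (real \<Rightarrow> real^'n) \<Rightarrow> (real \<Rightarrow> real^('n\<times>2)) \<Rightarrow> bool" where
  "is_solution P u S om th lr ls v it ir is \<longleftrightarrow>
    (\<forall>t\<in>S.
       flux_ok P (th t) (ir t) (is t) (lr t) (ls t) \<and>
       ((\<lambda>s. diagm (pM P) *v om s) has_vector_derivative
          (- (diagm (pD P) *v om t) - tau_e P (th t) (ir t) (is t) + fst u)) (at t within S) \<and>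
       (th has_vector_derivative om t) (at t within S) \<and>
       (lr has_vector_derivative (- (diagm (pRr P) *v ir t) + snd u)) (at t within S) \<and>
       (ls has_vector_derivative (- (RsM P *v is t) + v t)) (at t within S) \<and>
       ((\<lambda>s. CM P *v v s) has_vector_derivative
          (- (GM P *v v t) - EM P *v it t - is t)) (at t within S) \<and>
       ((\<lambda>s. LtM P *v it s) has_vector_derivative
          (- (RtM P *v it t) + transpose (EM P) *v v t)) (at t within S))"

definition in_Gamma :: "('n::finite, 'm::finite) mparams \<Rightarrow> real \<Rightarrow> real^'n \<Rightarrow> real^'n
    \<Rightarrow> real^'n \<Rightarrow> real^'n \<Rightarrow> real^('n\<times>2) \<Rightarrow> real^('m\<times>2) \<Rightarrow> real^'n \<Rightarrow> real^('n\<times>2) \<Rightarrow> bool" where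
  "in_Gamma P \<omega>0 irs \<theta>dq om th v it ir is \<longleftrightarrow>
     ir = irs \<and> om = \<omega>0 *\<^sub>R 1 \<and>
     (\<exists>s\<in>{0..<2 * pi / \<omega>0}.
        torus_eq th ((s * \<omega>0) *\<^sub>R 1 + \<theta>dq) \<and>
        (is, v, it) = pihat P \<omega>0 irs ((s * \<omega>0) *\<^sub>R 1 + \<theta>dq))"

definition renders_invariant :: "('n::finite, 'm::finite) mparams \<Rightarrow> real \<Rightarrow> real^'n \<Rightarrow> real^'n
    \<Rightarrow> (real^'n) \<times> (real^'n) \<Rightarrow> bool" where
  "renders_invariant P \<omega>0 irs \<theta>dq u \<longleftrightarrow>
    (\<forall>om0 th0 lr0 ls0 v0 it0 ir0 is0.
       flux_ok P th0 ir0 is0 lr0 ls0 \<and> in_Gamma P \<omega>0 irs \<theta>dq om0 th0 v0 it0 ir0 is0 \<longrightarrow>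
       (\<exists>om th lr ls v it ir is.
          is_solution P u {0..} om th lr ls v it ir is \<and>
          om 0 = om0 \<and> th 0 = th0 \<and> lr 0 = lr0 \<and> ls 0 = ls0 \<and> v 0 = v0 \<and> it 0 = it0 \<and>
          (\<forall>t\<ge>0. in_Gamma P \<omega>0 irs \<theta>dq (om t) (th t) (v t) (it t) (ir t) (is t)))) \<and>
    (\<forall>T om th lr ls v it ir is.
       is_solution P u {0..T} om th lr ls v it ir is \<and> 0 \<le> T \<and>
       in_Gamma P \<omega>0 irs \<theta>dq (om 0) (th 0) (v 0) (it 0) (ir 0) (is 0) \<longrightarrow>
       (\<forall>t\<in>{0..T}. in_Gamma P \<omega>0 irs \<theta>dq (om t) (th t) (v t) (it t) (ir t) (is t)))"

end

theory Submission
  imports Defs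
begin

text \<open>
  All network impedances act on the two-phase quantities of each bus as complex scalars, i.e. they
  commute with \<open>bj\<close>. Hence the network is equivariant under the diagonal shift
  \<open>\<theta> \<mapsto> \<theta> + c *\<^sub>R 1\<close> of the rotor angles: the shift multiplies the steady-state flows \<open>pihat\<close>
  by \<open>blkrot (c *\<^sub>R 1) = cos c + sin c bj\<close>, i.e. by \<open>exp (j c)\<close>. Along the fibre
  \<open>\<theta> t = \<theta>0 + \<omega>0 t 1\<close> the flows therefore have derivative \<open>\<omega>0 bj\<close> times themselves, which turns
  the electrical equations into the phasor equations that \<open>pihat\<close> solves by construction, while
  the stator current seen from the rotor, and with it the rotor flux and the torque
  \<open>Knet \<omega>0 1\<close>, stays constant. So the fibre trajectory is a solution for \<open>u*\<close>; conversely,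
  constancy of rotor flux and speed on \<open>\<Gamma>\<close> forces \<open>u = u*\<close>. Every other solution starting in
  \<open>\<Gamma>\<close> coincides with the fibre trajectory by Gronwall's inequality: the currents depend
  Lipschitz-continuously on the fluxes because each machine's inductance matrix is positive
  definite, so the vector field is Lipschitz along the two trajectories.
\<close>

(* Keep transpose A *v x in this form; by default it is rewritten to the row form x v* A. *)
declare transpose_matrix_vector [simp del] vector_transpose_matrix [simp del]

section \<open>Rotations and block-diagonal matrices\<close>

lemma matrix_add_rdistrib: "(A + B) ** C = A ** C + B ** C"
  for A B :: "real^'n^'m"
  by (vector matrix_matrix_mult_def sum.distrib distrib_right)

lemma matrix_mul_minus_right: "A ** (- B) = - (A ** B)"
  for A :: "real^'n^'m"
  by (vector matrix_matrix_mult_def sum_negf)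

lemma matrix_vector_mult_minus_left: "(- A) *v x = - (A *v x)"
  for A :: "real^'n^'m"
  by (simp add: matrix_vector_mult_def vec_eq_iff sum_negf)

lemma matrix_vector_mult_minus_right: "A *v (- x) = - (A *v x)"
  for A :: "real^'n^'m"
  using matrix_vector_mult_diff_distrib[of A 0 x] by simp

lemma matrix_vector_mult_scaleR_left: "(c *\<^sub>R A) *v x = c *\<^sub>R (A *v x)"
  for A :: "real^'n^'m"
  by (simp add: matrix_vector_mult_def vec_eq_iff sum_distrib_left ac_simps)

lemma rot_add: "rot a ** rot b = rot (a + b)"
  by (simp add: rot_def matrix_matrix_mult_def vec_eq_iff forall_2 sum_2 cos_add sin_add algebra_simps)

lemma rot_zero: "rot 0 = mat 1"
  by (simp add: rot_def mat_def vec_eq_iff forall_2)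

lemma transpose_rot: "transpose (rot a) = rot (- a)"
  by (simp add: rot_def transpose_def vec_eq_iff forall_2)

lemma rot_eq_cos_sin_jmat: "rot c = cos c *\<^sub>R mat 1 + sin c *\<^sub>R jmat"
  by (simp add: rot_def jmat_def mat_def vec_eq_iff forall_2)

lemma rot_periodic: "rot (a + 2 * pi * of_int k) = rot a"
  by (simp add: rot_def cos_add sin_add cos_int_2pin sin_int_2pin)

lemma jmat_rot_commute: "jmat ** rot a = rot a ** jmat"
  by (simp add: rot_def jmat_def matrix_matrix_mult_def vec_eq_iff forall_2 sum_2)

lemma jmat_jmat: "jmat ** jmat = - mat 1"
  by (simp add: jmat_def mat_def matrix_matrix_mult_def vec_eq_iff forall_2 sum_2)

lemma transpose_jmat: "transpose jmat = - jmat"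
  by (simp add: jmat_def transpose_def vec_eq_iff forall_2)

lemma jmat_e1: "jmat *v e1 = e2"
  by (simp add: jmat_def e1_def e2_def matrix_vector_mult_def vec_eq_iff forall_2 sum_2)

definition blkdiag :: "('n::finite \<Rightarrow> real^2^2) \<Rightarrow> real^('n\<times>2)^('n\<times>2)" where
  "blkdiag f = (\<chi> p q. if fst p = fst q then f (fst p) $ snd p $ snd q else 0)"

lemma sum_UNIV_prod: "(\<Sum>r\<in>UNIV. g r) = (\<Sum>i\<in>UNIV. \<Sum>k\<in>UNIV. g (i, k))"
  for g :: "'a::finite \<times> 'b::finite \<Rightarrow> 'c::comm_monoid_add"
  by (subst UNIV_Times_UNIV[symmetric], subst sum.cartesian_product) (simp add: split_def)

lemma sum_UNIV_prod_fst_eq: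
  "(\<Sum>r\<in>UNIV. if fst p = fst r then h r else 0) = (\<Sum>k\<in>UNIV. h (fst p, k))"
  for h :: "'a::finite \<times> 'b::finite \<Rightarrow> 'c::comm_monoid_add"
proof -
  have "(\<Sum>r\<in>UNIV. if fst p = fst r then h r else 0)
      = (\<Sum>i\<in>UNIV. if fst p = i then (\<Sum>k\<in>UNIV. h (i, k)) else 0)"
    by (simp only: sum_UNIV_prod fst_conv) (rule sum.cong; simp)
  then show ?thesis by simp
qed

lemma blkdiag_matrix_vector_mult:
  "(blkdiag f *v x) $ p = (\<Sum>k\<in>UNIV. f (fst p) $ snd p $ k * x $ (fst p, k))"
proof -
  have "(blkdiag f *v x) $ p
      = (\<Sum>r\<in>UNIV. if fst p = fst r then f (fst p) $ snd p $ snd r * x $ r else 0)"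
    unfolding blkdiag_def matrix_vector_mult_def by (auto intro: sum.cong)
  then show ?thesis by (simp add: sum_UNIV_prod_fst_eq)
qed

lemma blkdiag_mult: "blkdiag f ** blkdiag g = blkdiag (\<lambda>i. f i ** g i)"
proof -
  have "(blkdiag f ** blkdiag g) $ p $ q = blkdiag (\<lambda>i. f i ** g i) $ p $ q" for p q
  proof -
    have "(blkdiag f ** blkdiag g) $ p $ q = (\<Sum>r\<in>UNIV. if fst p = fst r then
        f (fst p) $ snd p $ snd r * (if fst r = fst q then g (fst r) $ snd r $ snd q else 0) else 0)"
      unfolding blkdiag_def matrix_matrix_mult_def by (auto intro: sum.cong)
    then show ?thesis
      by (simp add: sum_UNIV_prod_fst_eq blkdiag_def matrix_matrix_mult_def)
  qed
  then show ?thesis by (simp add: vec_eq_iff)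
qed

lemma transpose_blkdiag: "transpose (blkdiag f) = blkdiag (\<lambda>i. transpose (f i))"
  by (auto simp add: blkdiag_def transpose_def vec_eq_iff)

lemma blkdiag_add: "blkdiag f + blkdiag g = blkdiag (\<lambda>i. f i + g i)"
  by (auto simp add: blkdiag_def vec_eq_iff)

lemma scaleR_blkdiag: "c *\<^sub>R blkdiag f = blkdiag (\<lambda>i. c *\<^sub>R f i)"
  by (auto simp add: blkdiag_def vec_eq_iff)

lemma uminus_blkdiag: "- blkdiag f = blkdiag (\<lambda>i. - f i)"
  by (auto simp add: blkdiag_def vec_eq_iff)

lemma blkdiag_mat_1: "blkdiag (\<lambda>i. mat 1) = mat 1"
  by (auto simp add: blkdiag_def mat_def vec_eq_iff prod_eq_iff)

lemma blkrot_eq_blkdiag: "blkrot \<theta> = blkdiag (\<lambda>i. rot (\<theta> $ i))"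
  by (simp add: blkrot_def blkdiag_def)

lemma bj_eq_blkdiag: "bj = blkdiag (\<lambda>i. jmat)"
  by (auto simp add: bj_def kron_def blkdiag_def mat_def vec_eq_iff)

lemma blkrot_add: "blkrot (a + b) = blkrot a ** blkrot b"
  by (simp add: blkrot_eq_blkdiag blkdiag_mult rot_add)

lemma transpose_blkrot: "transpose (blkrot \<theta>) = blkrot (- \<theta>)"
  by (simp add: blkrot_eq_blkdiag transpose_blkdiag transpose_rot)

lemma transpose_blkrot_blkrot: "transpose (blkrot a) ** blkrot a = mat 1"
  by (simp add: blkrot_eq_blkdiag transpose_blkdiag blkdiag_mult transpose_rot rot_add rot_zero
      blkdiag_mat_1)

lemma blkrot_transpose_blkrot: "blkrot a ** transpose (blkrot a) = mat 1"
  by (simp add: blkrot_eq_blkdiag transpose_blkdiag blkdiag_mult transpose_rot rot_add rot_zero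
      blkdiag_mat_1)

lemma blkrot_scaleR_one: "blkrot (c *\<^sub>R 1) = cos c *\<^sub>R mat 1 + sin c *\<^sub>R bj"
  by (simp add: blkrot_eq_blkdiag bj_eq_blkdiag rot_eq_cos_sin_jmat scaleR_blkdiag blkdiag_add
      blkdiag_mat_1[symmetric])

lemma blkrot_periodic:
  assumes "torus_eq a b"
  shows "blkrot a = blkrot b"
proof -
  have "rot (a $ i) = rot (b $ i)" for i
  proof -
    obtain k :: int where "a $ i = b $ i + 2 * pi * of_int k"
      using assms by (auto simp: torus_eq_def algebra_simps)
    then show ?thesis by (simp add: rot_periodic)
  qed
  then show ?thesis by (simp add: blkrot_eq_blkdiag)
qed

lemma bj_bj: "bj ** bj = - mat 1"
  by (simp add: bj_eq_blkdiag blkdiag_mult jmat_jmat uminus_blkdiag[symmetric] blkdiag_mat_1)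

lemma transpose_bj: "transpose bj = - bj"
  by (simp add: bj_eq_blkdiag transpose_blkdiag transpose_jmat uminus_blkdiag)

lemma kron_mult: "kron A B ** kron C D = kron (A ** C) (B ** D)"
  by (simp add: kron_def matrix_matrix_mult_def vec_eq_iff sum_UNIV_prod sum_product ac_simps)

lemma transpose_kron: "transpose (kron A B) = kron (transpose A) (transpose B)"
  by (simp add: kron_def transpose_def vec_eq_iff)

lemma kron_I2_commute_bj: "kron A I2 ** bj = bj ** kron A I2"
  by (simp add: bj_def kron_mult I2_def)

lemma blkrot_commute_bj: "blkrot \<theta> ** bj = bj ** blkrot \<theta>"
  by (simp add: blkrot_eq_blkdiag bj_eq_blkdiag blkdiag_mult jmat_rot_commute)

lemma commute_add: "A ** X = X ** A \<Longrightarrow> B ** X = X ** B \<Longrightarrow> (A + B) ** X = X ** (A + B)"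
  for A B X :: "real^'k^'k"
  by (simp add: matrix_add_ldistrib matrix_add_rdistrib)

lemma commute_scaleR: "A ** X = X ** A \<Longrightarrow> (c *\<^sub>R A) ** X = X ** (c *\<^sub>R A)"
  for A X :: "real^'k^'k"
  by (metis matrix_scalar_ac scalar_matrix_assoc)

lemma commute_bj_mult:
  "A ** bj = bj ** A \<Longrightarrow> B ** bj = bj ** B \<Longrightarrow> (A ** B) ** bj = bj ** (A ** B)"
  by (metis matrix_mul_assoc)

lemma commute_bj_blkrot_scaleR_one:
  fixes A :: "real^('a::finite\<times>2)^('b::finite\<times>2)"
  assumes "A ** bj = bj ** A"
  shows "A ** blkrot (c *\<^sub>R 1) = blkrot (c *\<^sub>R 1) ** A"
  using assms by (simp add: blkrot_scaleR_one matrix_add_ldistrib matrix_add_rdistrib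
      matrix_scalar_ac scalar_matrix_assoc[symmetric])

lemma kron_diagm_I2_eq_blkdiag: "kron (diagm d) I2 = blkdiag (\<lambda>i. d $ i *\<^sub>R mat 1)"
  by (auto simp add: kron_def diagm_def I2_def blkdiag_def mat_def vec_eq_iff)

lemma kron_diagm_I2_matrix_vector_mult: "kron (diagm d) I2 *v x = (\<chi> p. d $ fst p * x $ p)"
proof -
  have "(kron (diagm d) I2 *v x) $ p = d $ fst p * x $ p" for p
  proof -
    have "(kron (diagm d) I2 *v x) $ p
        = (\<Sum>k\<in>UNIV. if snd p = k then d $ fst p * x $ (fst p, k) else 0)"
      unfolding kron_diagm_I2_eq_blkdiag blkdiag_matrix_vector_mult by (rule sum.cong) (auto simp: mat_def)
    then show ?thesis by simp
  qed
  then show ?thesis by (simp add: vec_eq_iff)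
qed

lemma transpose_kron_diagm_I2: "transpose (kron (diagm d) I2) = kron (diagm d) I2"
  by (simp add: kron_diagm_I2_eq_blkdiag transpose_blkdiag transpose_scalar)

section \<open>Quadratic forms and invertibility\<close>

lemma inner_matrix_vector_mult_transpose: "inner x (A *v y) = inner (transpose A *v x) y"
  for y :: "real^'n"
  by (simp add: transpose_matrix_vector dot_lmul_matrix)

lemma
  fixes A :: "real^'k^'k"
  assumes "invertible A"
  shows matrix_inv_right: "A ** matrix_inv A = mat 1" and matrix_inv_left: "matrix_inv A ** A = mat 1"
proof -
  have "\<exists>A'. A ** A' = mat 1 \<and> A' ** A = mat 1"
    using assms by (simp add: invertible_def)
  then have "A ** matrix_inv A = mat 1 \<and> matrix_inv A ** A = mat 1"
    unfolding matrix_inv_def by (rule someI_ex)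
  then show "A ** matrix_inv A = mat 1" "matrix_inv A ** A = mat 1" by auto
qed

lemma invertible_if_inner_pos:
  fixes A :: "real^'k^'k"
  assumes "\<And>x. x \<noteq> 0 \<Longrightarrow> 0 < inner x (A *v x)"
  shows "invertible A"
proof -
  have "\<forall>x. A *v x = 0 \<longrightarrow> x = 0"
    using assms by force
  then show ?thesis by (simp add: invertible_left_inverse matrix_left_invertible_ker)
qed

lemma inner_matrix_inv_nonneg:
  fixes A :: "real^'k^'k"
  assumes "invertible A" and "\<And>z. 0 \<le> inner z (A *v z)"
  shows "0 \<le> inner y (matrix_inv A *v y)"
proof -
  let ?z = "matrix_inv A *v y"
  have "y = A *v ?z"
    by (simp add: matrix_vector_mul_assoc matrix_inv_right[OF assms(1)])
  then have "inner y ?z = inner ?z (A *v ?z)"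
    by (metis inner_commute)
  then show ?thesis using assms(2) by simp
qed

lemma matrix_inv_commute:
  fixes A B :: "real^'k^'k"
  assumes "invertible A" and "A ** B = B ** A"
  shows "matrix_inv A ** B = B ** matrix_inv A"
proof -
  have "matrix_inv A ** B = matrix_inv A ** B ** (A ** matrix_inv A)"
    by (simp add: matrix_inv_right[OF assms(1)])
  also have "\<dots> = matrix_inv A ** (A ** B) ** matrix_inv A"
    by (simp add: matrix_mul_assoc assms(2))
  also have "\<dots> = B ** matrix_inv A"
    by (simp add: matrix_mul_assoc matrix_inv_left[OF assms(1)])
  finally show ?thesis .
qed

lemma invertible_matrix_vector_mult_eq_iff: "invertible A \<Longrightarrow> A *v x = A *v y \<longleftrightarrow> x = y"
  for A :: "real^'n^'n"
  by (metis matrix_inv_left matrix_vector_mul_assoc matrix_vector_mul_lid)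

lemma inner_skew_eq_0:
  fixes S :: "real^'k^'k"
  assumes "transpose S = - S"
  shows "inner x (S *v x) = 0"
proof -
  have "inner x (S *v x) = inner (transpose S *v x) x"
    by (rule inner_matrix_vector_mult_transpose)
  also have "\<dots> = - inner x (S *v x)"
    by (simp add: assms matrix_vector_mult_minus_left inner_commute)
  finally show ?thesis by simp
qed

lemma diagm_matrix_vector_mult: "(diagm d *v x) $ i = d $ i * x $ i"
  by (simp add: diagm_def matrix_vector_mult_def if_distrib if_distribR sum.delta cong: if_cong)

lemma invertible_diagm:
  fixes d :: "real^'n::finite"
  assumes "\<And>i. 0 < d $ i"
  shows "invertible (diagm d)"
proof (rule invertible_if_inner_pos)
  fix x :: "real^'n"
  assume "x \<noteq> 0"
  then obtain i where "x $ i \<noteq> 0"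
    by (auto simp: vec_eq_iff)
  moreover have "x $ j * (diagm d *v x) $ j = d $ j * (x $ j)\<^sup>2" for j
    by (simp add: diagm_matrix_vector_mult power2_eq_square)
  ultimately show "0 < inner x (diagm d *v x)"
    unfolding inner_vec_def by (intro sum_pos2[where i=i]) (auto simp: assms less_imp_le)
qed

lemma inner_kron_diagm_I2: "inner x (kron (diagm d) I2 *v x) = (\<Sum>p\<in>UNIV. d $ fst p * (x $ p)\<^sup>2)"
  by (simp add: kron_diagm_I2_matrix_vector_mult inner_vec_def power2_eq_square ac_simps)

lemma inner_kron_diagm_I2_nonneg: "(\<And>i. 0 \<le> d $ i) \<Longrightarrow> 0 \<le> inner x (kron (diagm d) I2 *v x)"
  unfolding inner_kron_diagm_I2 by (intro sum_nonneg) auto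

lemma inner_kron_diagm_I2_pos:
  assumes "\<And>i. 0 < d $ i" and "x \<noteq> 0"
  shows "0 < inner x (kron (diagm d) I2 *v x)"
proof -
  obtain p where "x $ p \<noteq> 0"
    using assms(2) by (auto simp: vec_eq_iff)
  then show ?thesis
    unfolding inner_kron_diagm_I2 by (intro sum_pos2[where i=p]) (auto simp: assms less_imp_le)
qed

lemma invertible_kron_diagm_I2: "(\<And>i. 0 < d $ i) \<Longrightarrow> invertible (kron (diagm d) I2)"
  by (intro invertible_if_inner_pos inner_kron_diagm_I2_pos)

lemma inner_impedance_eq:
  "inner x ((kron (diagm r) I2 + c *\<^sub>R (bj ** kron (diagm l) I2)) *v x) = inner x (kron (diagm r) I2 *v x)"
proof -
  have "transpose (c *\<^sub>R (bj ** kron (diagm l) I2)) = - (c *\<^sub>R (bj ** kron (diagm l) I2))"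
    by (simp add: transpose_scalar matrix_transpose_mul transpose_kron_diagm_I2 transpose_bj
        matrix_mul_minus_right kron_I2_commute_bj)
  then show ?thesis
    by (simp add: matrix_vector_mult_add_rdistrib inner_add_right inner_skew_eq_0)
qed

section \<open>The network matrices\<close>

lemma valid_params_pos:
  assumes "valid_params P"
  shows "0 < pM P $ i" "0 < pD P $ i" "0 < pRr P $ i" "0 < pLr P $ i" "0 < pLm P $ i"
    "0 < pRs P $ i" "0 < pLs P $ i" "0 < pC P $ i" "0 < pG P $ i"
    "0 < pLs P $ i * pLr P $ i - (pLm P $ i)\<^sup>2" "0 < pLt P $ e" "0 < pRt P $ e"
  using assms by (auto simp: valid_params_def)

lemma invertible_Zt: "valid_params P \<Longrightarrow> invertible (Zt P w)"
  by (rule invertible_if_inner_pos)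
    (simp add: Zt_def RtM_def LtM_def inner_impedance_eq inner_kron_diagm_I2_pos valid_params_pos)

lemma inner_Lnet_nonneg:
  assumes "valid_params P"
  shows "0 \<le> inner x (Lnet P w *v x)"
proof -
  have "inner x (Lnet P w *v x)
      = inner (transpose (EM P) *v x) (matrix_inv (Zt P w) *v (transpose (EM P) *v x))"
    by (simp add: Lnet_def matrix_vector_mul_assoc[symmetric] inner_matrix_vector_mult_transpose)
  also have "0 \<le> \<dots>"
    by (rule inner_matrix_inv_nonneg[OF invertible_Zt[OF assms]])
      (simp add: Zt_def RtM_def LtM_def inner_impedance_eq inner_kron_diagm_I2_nonneg
        valid_params_pos[OF assms] less_imp_le)
  finally show ?thesis .
qed

lemma inner_Yc_Lnet_pos:
  assumes "valid_params P" and "x \<noteq> 0"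
  shows "0 < inner x ((Yc P w + Lnet P w) *v x)"
proof -
  have "0 < inner x (Yc P w *v x)"
    by (simp add: Yc_def GM_def CM_def inner_impedance_eq inner_kron_diagm_I2_pos
        valid_params_pos[OF assms(1)] assms(2))
  then show ?thesis
    using inner_Lnet_nonneg[OF assms(1), of x w]
    by (simp add: matrix_vector_mult_add_rdistrib inner_add_right)
qed

lemma invertible_Yc_Lnet: "valid_params P \<Longrightarrow> invertible (Yc P w + Lnet P w)"
  by (rule invertible_if_inner_pos) (rule inner_Yc_Lnet_pos)

lemma invertible_Zs_Yc_Lnet:
  fixes P :: "('n::finite, 'm::finite) mparams"
  assumes "valid_params P"
  shows "invertible (Zs P w + matrix_inv (Yc P w + Lnet P w))"
proof (rule invertible_if_inner_pos)
  fix x :: "real^('n\<times>2)"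
  assume "x \<noteq> 0"
  then have "0 < inner x (Zs P w *v x)"
    by (simp add: Zs_def RsM_def LsM_def inner_impedance_eq inner_kron_diagm_I2_pos
        valid_params_pos[OF assms])
  moreover have "0 \<le> inner x (matrix_inv (Yc P w + Lnet P w) *v x)"
    using inner_Yc_Lnet_pos[OF assms]
    by (intro inner_matrix_inv_nonneg invertible_Yc_Lnet assms) (metis inner_zero_left less_eq_real_def)
  ultimately show "0 < inner x ((Zs P w + matrix_inv (Yc P w + Lnet P w)) *v x)"
    by (simp add: matrix_vector_mult_add_rdistrib inner_add_right)
qed

lemma CM_commute_bj: "CM P ** bj = bj ** CM P"
  by (simp add: CM_def kron_I2_commute_bj)

lemma LtM_commute_bj: "LtM P ** bj = bj ** LtM P"
  by (simp add: LtM_def kron_I2_commute_bj)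

lemma Zs_commute_bj: "Zs P w ** bj = bj ** Zs P w"
  unfolding Zs_def RsM_def LsM_def
  by (intro commute_add commute_scaleR commute_bj_mult kron_I2_commute_bj refl)

lemma Yc_commute_bj: "Yc P w ** bj = bj ** Yc P w"
  unfolding Yc_def GM_def CM_def
  by (intro commute_add commute_scaleR commute_bj_mult kron_I2_commute_bj refl)

lemma Zt_commute_bj: "Zt P w ** bj = bj ** Zt P w"
  unfolding Zt_def RtM_def LtM_def
  by (intro commute_add commute_scaleR commute_bj_mult kron_I2_commute_bj refl)

lemma EM_commute_bj: "EM P ** bj = bj ** EM P"
  by (simp add: EM_def kron_I2_commute_bj)

lemma transpose_EM_commute_bj: "transpose (EM P) ** bj = bj ** transpose (EM P)"
proof -
  have "transpose I2 = I2"
    by (simp add: I2_def transpose_mat)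
  then show ?thesis
    by (simp add: EM_def transpose_kron kron_I2_commute_bj)
qed

lemma matrix_inv_Zt_commute_bj:
  "valid_params P \<Longrightarrow> matrix_inv (Zt P w) ** bj = bj ** matrix_inv (Zt P w)"
  by (rule matrix_inv_commute[OF invertible_Zt Zt_commute_bj])

lemma Lnet_commute_bj: "valid_params P \<Longrightarrow> Lnet P w ** bj = bj ** Lnet P w"
  unfolding Lnet_def
  by (intro commute_bj_mult EM_commute_bj transpose_EM_commute_bj matrix_inv_Zt_commute_bj)

lemma matrix_inv_Yc_Lnet_commute_bj:
  "valid_params P \<Longrightarrow> matrix_inv (Yc P w + Lnet P w) ** bj = bj ** matrix_inv (Yc P w + Lnet P w)"
  by (intro matrix_inv_commute invertible_Yc_Lnet commute_add Yc_commute_bj Lnet_commute_bj)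

lemma Ynet_commute_bj: "valid_params P \<Longrightarrow> Ynet P w ** bj = bj ** Ynet P w"
  unfolding Ynet_def
  by (intro matrix_inv_commute invertible_Zs_Yc_Lnet commute_add Zs_commute_bj
      matrix_inv_Yc_Lnet_commute_bj)

section \<open>The steady-state flows along a fibre\<close>

text \<open>\<open>emf\<close> is the voltage \<open>\<omega>0 R\<^sub>\<theta> (L\<^sub>m \<otimes> e\<^sub>2) i\<^sub>r*\<close> induced by the rotor currents;
  \<open>pi_is\<close>, \<open>pi_v\<close> and \<open>pi_it\<close> are the three block rows of \<open>\<Pi>\<close> applied to it.\<close>
definition emf :: "('n::finite, 'm::finite) mparams \<Rightarrow> real \<Rightarrow> real^'n \<Rightarrow> real^'n \<Rightarrow> real^('n\<times>2)" where
  "emf P w irs \<theta> = w *\<^sub>R (blkrot \<theta> *v (kron_col (diagm (pLm P)) e2 *v irs))"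

definition pi_is :: "('n::finite, 'm::finite) mparams \<Rightarrow> real \<Rightarrow> real^'n \<Rightarrow> real^'n \<Rightarrow> real^('n\<times>2)" where
  "pi_is P w irs \<theta> = - (Ynet P w *v emf P w irs \<theta>)"

definition pi_v :: "('n::finite, 'm::finite) mparams \<Rightarrow> real \<Rightarrow> real^'n \<Rightarrow> real^'n \<Rightarrow> real^('n\<times>2)" where
  "pi_v P w irs \<theta> = matrix_inv (Yc P w + Lnet P w) *v (Ynet P w *v emf P w irs \<theta>)"

definition pi_it :: "('n::finite, 'm::finite) mparams \<Rightarrow> real \<Rightarrow> real^'n \<Rightarrow> real^'n \<Rightarrow> real^('m\<times>2)" where
  "pi_it P w irs \<theta> = matrix_inv (Zt P w) *v (transpose (EM P) *v pi_v P w irs \<theta>)"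

lemma pihat_eq: "pihat P w irs \<theta> = (pi_is P w irs \<theta>, pi_v P w irs \<theta>, pi_it P w irs \<theta>)"
  by (simp add: pihat_def pi_is_def pi_v_def pi_it_def emf_def Let_def)

lemma emf_periodic: "torus_eq a b \<Longrightarrow> emf P w irs a = emf P w irs b"
  by (simp add: emf_def blkrot_periodic)

lemma pi_periodic:
  assumes "torus_eq a b"
  shows "pi_is P w irs a = pi_is P w irs b" "pi_v P w irs a = pi_v P w irs b"
    "pi_it P w irs a = pi_it P w irs b"
  by (simp_all add: pi_is_def pi_v_def pi_it_def emf_periodic[OF assms])

lemma emf_eq_Zs_pi_is:
  assumes "valid_params P"
  shows "emf P w irs \<theta> = - (Zs P w *v pi_is P w irs \<theta>) + pi_v P w irs \<theta>"
proof -
  have "(Zs P w + matrix_inv (Yc P w + Lnet P w)) ** Ynet P w = mat 1"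
    unfolding Ynet_def by (rule matrix_inv_right[OF invertible_Zs_Yc_Lnet[OF assms]])
  then have "emf P w irs \<theta> = (Zs P w + matrix_inv (Yc P w + Lnet P w)) *v (Ynet P w *v emf P w irs \<theta>)"
    by (simp add: matrix_vector_mul_assoc)
  then show ?thesis
    by (simp add: pi_is_def pi_v_def matrix_vector_mult_add_rdistrib matrix_vector_mult_minus_right)
qed

lemma Yc_pi_v_eq:
  assumes "valid_params P"
  shows "Yc P w *v pi_v P w irs \<theta> + EM P *v pi_it P w irs \<theta> = - pi_is P w irs \<theta>"
proof -
  have "(Yc P w + Lnet P w) ** matrix_inv (Yc P w + Lnet P w) = mat 1"
    by (rule matrix_inv_right[OF invertible_Yc_Lnet[OF assms]])
  then have "(Yc P w + Lnet P w) *v pi_v P w irs \<theta> = - pi_is P w irs \<theta>"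
    by (simp add: pi_is_def pi_v_def matrix_vector_mul_assoc matrix_mul_assoc)
  then show ?thesis
    by (simp add: Lnet_def pi_it_def matrix_vector_mult_add_rdistrib matrix_vector_mul_assoc
        matrix_mul_assoc)
qed

lemma Zt_pi_it_eq:
  assumes "valid_params P"
  shows "Zt P w *v pi_it P w irs \<theta> = transpose (EM P) *v pi_v P w irs \<theta>"
  by (simp add: pi_it_def matrix_vector_mul_assoc matrix_mul_assoc
      matrix_inv_right[OF invertible_Zt[OF assms]])

text \<open>By \<open>blkrot_scaleR_one\<close>, \<open>blkrot (c *\<^sub>R 1)\<close> multiplies every phasor by \<open>exp (j c)\<close>.\<close>
definition phase_equivariant :: "(real^'n::finite \<Rightarrow> real^('k::finite\<times>2)) \<Rightarrow> bool" where
  "phase_equivariant g \<longleftrightarrow> (\<forall>\<theta> c. g (\<theta> + c *\<^sub>R 1) = blkrot (c *\<^sub>R 1) *v g \<theta>)"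

lemma blkrot_add_scaleR_one: "blkrot (\<theta> + c *\<^sub>R 1) = blkrot (c *\<^sub>R 1) ** blkrot \<theta>"
  by (metis add.commute blkrot_add)

lemma phase_equivariant_blkrot: "phase_equivariant (\<lambda>\<theta>. blkrot \<theta> *v x)"
  by (simp add: phase_equivariant_def blkrot_add_scaleR_one matrix_vector_mul_assoc)

lemma phase_equivariant_matrix_vector_mult:
  assumes "phase_equivariant g" and "A ** bj = bj ** A"
  shows "phase_equivariant (\<lambda>\<theta>. A *v g \<theta>)"
  using assms commute_bj_blkrot_scaleR_one[OF assms(2)]
  by (simp add: phase_equivariant_def matrix_vector_mul_assoc)

lemma phase_equivariant_add:
  "phase_equivariant f \<Longrightarrow> phase_equivariant g \<Longrightarrow> phase_equivariant (\<lambda>\<theta>. f \<theta> + g \<theta>)"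
  by (simp add: phase_equivariant_def matrix_vector_right_distrib)

lemma phase_equivariant_uminus: "phase_equivariant g \<Longrightarrow> phase_equivariant (\<lambda>\<theta>. - g \<theta>)"
  by (simp add: phase_equivariant_def matrix_vector_mult_minus_right)

lemma phase_equivariant_emf: "phase_equivariant (emf P w irs)"
  unfolding emf_def matrix_vector_mult_scaleR[symmetric] by (rule phase_equivariant_blkrot)

lemma phase_equivariant_pi:
  assumes "valid_params P"
  shows "phase_equivariant (pi_is P w irs)" "phase_equivariant (pi_v P w irs)"
    "phase_equivariant (pi_it P w irs)"
proof -
  have Y: "phase_equivariant (\<lambda>\<theta>. Ynet P w *v emf P w irs \<theta>)"
    by (intro phase_equivariant_matrix_vector_mult phase_equivariant_emf Ynet_commute_bj assms)
  then show "phase_equivariant (pi_is P w irs)"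
    unfolding pi_is_def[abs_def] by (rule phase_equivariant_uminus)
  show V: "phase_equivariant (pi_v P w irs)"
    unfolding pi_v_def[abs_def]
    by (intro phase_equivariant_matrix_vector_mult Y matrix_inv_Yc_Lnet_commute_bj assms)
  show "phase_equivariant (pi_it P w irs)"
    unfolding pi_it_def[abs_def]
    by (intro phase_equivariant_matrix_vector_mult V matrix_inv_Zt_commute_bj
        transpose_EM_commute_bj assms)
qed

lemma transpose_blkrot_phase_equivariant:
  assumes "phase_equivariant g"
  shows "transpose (blkrot (\<theta> + c *\<^sub>R 1)) *v g (\<theta> + c *\<^sub>R 1) = transpose (blkrot \<theta>) *v g \<theta>"
  using assms
  by (simp add: phase_equivariant_def blkrot_add_scaleR_one matrix_transpose_mul matrix_vector_mul_assoc
      matrix_mul_assoc[symmetric]) (simp add: matrix_mul_assoc transpose_blkrot_blkrot)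

lemma has_vector_derivative_phase_equivariant:
  assumes "phase_equivariant g"
  shows "((\<lambda>t. g (\<theta>0 + (w * t) *\<^sub>R 1)) has_vector_derivative w *\<^sub>R (bj *v g (\<theta>0 + (w * t) *\<^sub>R 1)))
    (at t within S)"
proof -
  have g: "g (\<theta>0 + (w * t) *\<^sub>R 1) = cos (w * t) *\<^sub>R g \<theta>0 + sin (w * t) *\<^sub>R (bj *v g \<theta>0)" for t
    using assms by (simp add: phase_equivariant_def blkrot_scaleR_one matrix_vector_mult_add_rdistrib
        matrix_vector_mult_scaleR_left)
  have "((\<lambda>t. cos (w * t) *\<^sub>R g \<theta>0 + sin (w * t) *\<^sub>R (bj *v g \<theta>0)) has_vector_derivative
      (- sin (w * t) * w) *\<^sub>R g \<theta>0 + (cos (w * t) * w) *\<^sub>R (bj *v g \<theta>0)) (at t within S)"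
    by (auto intro!: derivative_eq_intros)
  moreover have "(- sin (w * t) * w) *\<^sub>R g \<theta>0 + (cos (w * t) * w) *\<^sub>R (bj *v g \<theta>0)
      = w *\<^sub>R (bj *v g (\<theta>0 + (w * t) *\<^sub>R 1))"
    by (simp only: g) (simp add: matrix_vector_right_distrib matrix_vector_mult_scaleR matrix_vector_mul_assoc bj_bj
        matrix_vector_mult_minus_left algebra_simps)
  ultimately show ?thesis
    by (simp add: g)
qed

lemma rotor_frame_current_on_fibre:
  assumes "valid_params P" and "torus_eq \<theta> (c *\<^sub>R 1 + \<theta>dq)"
  shows "transpose (blkrot \<theta>) *v pi_is P w irs \<theta> = transpose (blkrot \<theta>dq) *v pi_is P w irs \<theta>dq"
proof -
  have "torus_eq \<theta> (\<theta>dq + c *\<^sub>R 1)"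
    using assms(2) by (simp add: add.commute)
  then show ?thesis
    using transpose_blkrot_phase_equivariant[OF phase_equivariant_pi(1)[OF assms(1)], of \<theta>dq c]
    by (simp add: blkrot_periodic pi_periodic)
qed

lemma tau_e_pi_is: "tau_e P \<theta> irs (pi_is P w irs \<theta>) = Knet P w irs \<theta> *v (w *\<^sub>R 1)"
proof -
  have "diagm irs *v 1 = irs"
    by (simp add: vec_eq_iff diagm_matrix_vector_mult)
  then show ?thesis
    by (simp add: tau_e_def pi_is_def emf_def Knet_def matrix_vector_mul_assoc[symmetric]
        matrix_vector_mult_scaleR matrix_vector_mult_minus_right)
qed

lemma tau_e_on_fibre:
  assumes "valid_params P" and "torus_eq \<theta> (c *\<^sub>R 1 + \<theta>dq)"
  shows "tau_e P \<theta> irs (pi_is P w irs \<theta>) = Knet P w irs \<theta>dq *v (w *\<^sub>R 1)"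
proof -
  have "tau_e P \<theta> irs (pi_is P w irs \<theta>) = tau_e P \<theta>dq irs (pi_is P w irs \<theta>dq)"
    unfolding tau_e_def rotor_frame_current_on_fibre[OF assms] ..
  then show ?thesis by (simp add: tau_e_pi_is)
qed

definition rotor_flux :: "('n::finite, 'm::finite) mparams \<Rightarrow> real^'n \<Rightarrow> real^'n \<Rightarrow> real^('n\<times>2) \<Rightarrow> real^'n" where
  "rotor_flux P \<theta> ir is =
     diagm (pLr P) *v ir + kron_row (diagm (pLm P)) e1 *v (transpose (blkrot \<theta>) *v is)"

definition stator_flux :: "('n::finite, 'm::finite) mparams \<Rightarrow> real^'n \<Rightarrow> real^'n \<Rightarrow> real^('n\<times>2) \<Rightarrow> real^('n\<times>2)" where
  "stator_flux P \<theta> ir is = LsM P *v is + blkrot \<theta> *v (kron_col (diagm (pLm P)) e1 *v ir)"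

lemma flux_ok_iff: "flux_ok P \<theta> ir is lr ls \<longleftrightarrow> lr = rotor_flux P \<theta> ir is \<and> ls = stator_flux P \<theta> ir is"
  by (auto simp add: flux_ok_def rotor_flux_def stator_flux_def)

lemma rotor_flux_on_fibre:
  assumes "valid_params P" and "torus_eq \<theta> (c *\<^sub>R 1 + \<theta>dq)"
  shows "rotor_flux P \<theta> irs (pi_is P w irs \<theta>) = rotor_flux P \<theta>dq irs (pi_is P w irs \<theta>dq)"
  unfolding rotor_flux_def rotor_frame_current_on_fibre[OF assms] ..

lemma kron_col_matrix_vector_mult: "(kron_col A v *v x) $ p = v $ snd p * (A *v x) $ fst p"
  by (simp add: kron_col_def matrix_vector_mult_def sum_distrib_left ac_simps)

lemma bj_kron_col_e1: "bj *v (kron_col A e1 *v x) = kron_col A e2 *v x"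
proof -
  have "(bj *v (kron_col A e1 *v x)) $ p = (jmat *v e1) $ snd p * (A *v x) $ fst p" for p
    unfolding bj_eq_blkdiag blkdiag_matrix_vector_mult kron_col_matrix_vector_mult
    by (simp add: matrix_vector_mult_def[of jmat] sum_distrib_left ac_simps)
  then show ?thesis
    by (simp add: vec_eq_iff jmat_e1 kron_col_matrix_vector_mult)
qed

lemma stator_flux_phasor:
  assumes "valid_params P"
  shows "w *\<^sub>R (bj *v stator_flux P \<theta> irs (pi_is P w irs \<theta>))
    = - (RsM P *v pi_is P w irs \<theta>) + pi_v P w irs \<theta>"
proof -
  have "w *\<^sub>R (bj *v (blkrot \<theta> *v (kron_col (diagm (pLm P)) e1 *v irs))) = emf P w irs \<theta>"
    by (simp add: emf_def matrix_vector_mul_assoc matrix_mul_assoc blkrot_commute_bj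
        flip: bj_kron_col_e1)
  then show ?thesis
    using emf_eq_Zs_pi_is[OF assms, of w irs \<theta>]
    by (simp add: stator_flux_def Zs_def matrix_vector_right_distrib matrix_vector_mult_add_rdistrib
        matrix_vector_mult_scaleR_left matrix_vector_mul_assoc algebra_simps)
qed

lemma node_phasor:
  assumes "valid_params P"
  shows "w *\<^sub>R (bj *v (CM P *v pi_v P w irs \<theta>))
    = - (GM P *v pi_v P w irs \<theta>) - EM P *v pi_it P w irs \<theta> - pi_is P w irs \<theta>"
proof -
  have "GM P *v pi_v P w irs \<theta> + w *\<^sub>R (bj *v (CM P *v pi_v P w irs \<theta>)) + EM P *v pi_it P w irs \<theta>
      = - pi_is P w irs \<theta>"
    using Yc_pi_v_eq[OF assms, of w irs \<theta>]
    by (simp add: Yc_def matrix_vector_mult_add_rdistrib matrix_vector_mult_scaleR_left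
        matrix_vector_mul_assoc)
  then show ?thesis
    by (simp add: algebra_simps eq_neg_iff_add_eq_0)
qed

lemma line_phasor:
  assumes "valid_params P"
  shows "w *\<^sub>R (bj *v (LtM P *v pi_it P w irs \<theta>))
    = - (RtM P *v pi_it P w irs \<theta>) + transpose (EM P) *v pi_v P w irs \<theta>"
  using Zt_pi_it_eq[OF assms, of w irs \<theta>]
  by (simp add: Zt_def matrix_vector_mult_add_rdistrib matrix_vector_mult_scaleR_left
      matrix_vector_mul_assoc algebra_simps)

lemma phase_equivariant_stator_flux:
  "valid_params P \<Longrightarrow> phase_equivariant (\<lambda>\<theta>. stator_flux P \<theta> irs (pi_is P w irs \<theta>))"
  unfolding stator_flux_def LsM_def
  by (intro phase_equivariant_add phase_equivariant_matrix_vector_mult phase_equivariant_pi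
      phase_equivariant_blkrot kron_I2_commute_bj)

section \<open>The invariant set\<close>

lemma torus_eq_sym: "torus_eq a b \<Longrightarrow> torus_eq b a"
  unfolding torus_eq_def by (metis minus_diff_eq mult_minus_right of_int_minus)

lemma torus_eq_trans:
  assumes "torus_eq a b" and "torus_eq b c"
  shows "torus_eq a c"
  unfolding torus_eq_def
proof
  fix i
  obtain k l :: int where "a $ i - b $ i = 2 * pi * of_int k" and "b $ i - c $ i = 2 * pi * of_int l"
    using assms unfolding torus_eq_def by meson
  then have "a $ i - c $ i = 2 * pi * of_int (k + l)"
    by (simp add: algebra_simps)
  then show "\<exists>k::int. a $ i - c $ i = 2 * pi * of_int k" ..
qed

lemma torus_eq_add: "torus_eq a b \<Longrightarrow> torus_eq (a + x) (b + x)"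
  unfolding torus_eq_def by simp

lemma torus_eq_scaleR_one_reduce:
  assumes "0 < w"
  obtains s where "s \<in> {0..<2 * pi / w}" and "torus_eq (c *\<^sub>R 1 + \<theta>) ((s * w) *\<^sub>R 1 + \<theta>)"
proof
  define k where "k = \<lfloor>c / (2 * pi)\<rfloor>"
  have "2 * pi * of_int k \<le> c" and "c < 2 * pi * of_int k + 2 * pi"
    using floor_divide_lower[of "2 * pi" c] floor_divide_upper[of "2 * pi" c]
    by (simp_all add: k_def algebra_simps)
  then show "(c - 2 * pi * of_int k) / w \<in> {0..<2 * pi / w}"
    using assms by (simp add: divide_strict_right_mono)
  show "torus_eq (c *\<^sub>R 1 + \<theta>) ((((c - 2 * pi * of_int k) / w) * w) *\<^sub>R 1 + \<theta>)"
    using assms unfolding torus_eq_def by (auto intro: exI[of _ k])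
qed

lemma in_Gamma_iff:
  assumes "0 < w"
  shows "in_Gamma P w irs \<theta>dq om \<theta> v it ir is \<longleftrightarrow>
    ir = irs \<and> om = w *\<^sub>R 1 \<and> (\<exists>c. torus_eq \<theta> (c *\<^sub>R 1 + \<theta>dq)) \<and>
    is = pi_is P w irs \<theta> \<and> v = pi_v P w irs \<theta> \<and> it = pi_it P w irs \<theta>"
proof
  assume "in_Gamma P w irs \<theta>dq om \<theta> v it ir is"
  then obtain s where "torus_eq \<theta> ((s * w) *\<^sub>R 1 + \<theta>dq)"
    and "(is, v, it) = pihat P w irs ((s * w) *\<^sub>R 1 + \<theta>dq)" and "ir = irs" and "om = w *\<^sub>R 1"
    by (auto simp: in_Gamma_def)
  then show "ir = irs \<and> om = w *\<^sub>R 1 \<and> (\<exists>c. torus_eq \<theta> (c *\<^sub>R 1 + \<theta>dq)) \<and>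
    is = pi_is P w irs \<theta> \<and> v = pi_v P w irs \<theta> \<and> it = pi_it P w irs \<theta>"
    by (auto simp: pihat_eq pi_periodic[OF torus_eq_sym])
next
  assume point: "ir = irs \<and> om = w *\<^sub>R 1 \<and> (\<exists>c. torus_eq \<theta> (c *\<^sub>R 1 + \<theta>dq)) \<and>
    is = pi_is P w irs \<theta> \<and> v = pi_v P w irs \<theta> \<and> it = pi_it P w irs \<theta>"
  then obtain c where "torus_eq \<theta> (c *\<^sub>R 1 + \<theta>dq)"
    by blast
  moreover obtain s where "s \<in> {0..<2 * pi / w}" and "torus_eq (c *\<^sub>R 1 + \<theta>dq) ((s * w) *\<^sub>R 1 + \<theta>dq)"
    using torus_eq_scaleR_one_reduce[OF assms] .
  ultimately have "s \<in> {0..<2 * pi / w}" and fibre: "torus_eq \<theta> ((s * w) *\<^sub>R 1 + \<theta>dq)"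
    by (auto intro: torus_eq_trans)
  moreover have "pihat P w irs ((s * w) *\<^sub>R 1 + \<theta>dq) = (is, v, it)"
    using point by (simp add: pihat_eq pi_periodic[OF torus_eq_sym[OF fibre]])
  ultimately show "in_Gamma P w irs \<theta>dq om \<theta> v it ir is"
    using point unfolding in_Gamma_def by auto
qed

lemma fibre_trajectory_is_solution:
  fixes P :: "('n::finite, 'm::finite) mparams"
  assumes vp: "valid_params P" and fibre: "torus_eq \<theta>0 (c *\<^sub>R 1 + \<theta>dq)"
    and ur: "ur = diagm (pRr P) *v irs"
    and um: "um = (diagm (pD P) + Knet P w irs \<theta>dq) *v (w *\<^sub>R 1)"
  defines "\<theta> \<equiv> \<lambda>t. \<theta>0 + (w * t) *\<^sub>R 1"
  shows "is_solution P (um, ur) S (\<lambda>t. w *\<^sub>R 1) \<theta>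
    (\<lambda>t. rotor_flux P (\<theta> t) irs (pi_is P w irs (\<theta> t)))
    (\<lambda>t. stator_flux P (\<theta> t) irs (pi_is P w irs (\<theta> t)))
    (\<lambda>t. pi_v P w irs (\<theta> t)) (\<lambda>t. pi_it P w irs (\<theta> t)) (\<lambda>t. irs) (\<lambda>t. pi_is P w irs (\<theta> t))"
  unfolding is_solution_def
proof (intro ballI conjI)
  fix t
  have fibre_t: "torus_eq (\<theta> t) ((c + w * t) *\<^sub>R 1 + \<theta>dq)" for t
    using torus_eq_add[OF fibre, of "(w * t) *\<^sub>R 1"] by (simp add: \<theta>_def algebra_simps)
  show "flux_ok P (\<theta> t) irs (pi_is P w irs (\<theta> t)) (rotor_flux P (\<theta> t) irs (pi_is P w irs (\<theta> t)))
      (stator_flux P (\<theta> t) irs (pi_is P w irs (\<theta> t)))"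
    by (simp add: flux_ok_iff)
  show "((\<lambda>s. diagm (pM P) *v (w *\<^sub>R 1)) has_vector_derivative
      - (diagm (pD P) *v (w *\<^sub>R 1)) - tau_e P (\<theta> t) irs (pi_is P w irs (\<theta> t)) + fst (um, ur))
      (at t within S)"
    using tau_e_on_fibre[OF vp fibre_t]
    by (simp add: um matrix_vector_mult_add_rdistrib)
  show "(\<theta> has_vector_derivative w *\<^sub>R 1) (at t within S)"
    unfolding \<theta>_def by (auto intro!: derivative_eq_intros)
  show "((\<lambda>t. rotor_flux P (\<theta> t) irs (pi_is P w irs (\<theta> t))) has_vector_derivative
      - (diagm (pRr P) *v irs) + snd (um, ur)) (at t within S)"
    using rotor_flux_on_fibre[OF vp fibre_t] by (simp add: ur)
  show "((\<lambda>t. stator_flux P (\<theta> t) irs (pi_is P w irs (\<theta> t))) has_vector_derivative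
      - (RsM P *v pi_is P w irs (\<theta> t)) + pi_v P w irs (\<theta> t)) (at t within S)"
    unfolding \<theta>_def
    by (rule has_vector_derivative_eq_rhs[OF has_vector_derivative_phase_equivariant[OF
          phase_equivariant_stator_flux[OF vp]] stator_flux_phasor[OF vp]])
  show "((\<lambda>s. CM P *v pi_v P w irs (\<theta> s)) has_vector_derivative
      - (GM P *v pi_v P w irs (\<theta> t)) - EM P *v pi_it P w irs (\<theta> t) - pi_is P w irs (\<theta> t))
      (at t within S)"
    unfolding \<theta>_def
    by (rule has_vector_derivative_eq_rhs[OF has_vector_derivative_phase_equivariant[OF
          phase_equivariant_matrix_vector_mult[OF phase_equivariant_pi(2)[OF vp] CM_commute_bj]]
          node_phasor[OF vp]])
  show "((\<lambda>s. LtM P *v pi_it P w irs (\<theta> s)) has_vector_derivative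
      - (RtM P *v pi_it P w irs (\<theta> t)) + transpose (EM P) *v pi_v P w irs (\<theta> t)) (at t within S)"
    unfolding \<theta>_def
    by (rule has_vector_derivative_eq_rhs[OF has_vector_derivative_phase_equivariant[OF
          phase_equivariant_matrix_vector_mult[OF phase_equivariant_pi(3)[OF vp] LtM_commute_bj]]
          line_phasor[OF vp]])
qed

lemma fibre_trajectory_in_Gamma:
  assumes "0 < w" and "torus_eq \<theta>0 (c *\<^sub>R 1 + \<theta>dq)"
  shows "in_Gamma P w irs \<theta>dq (w *\<^sub>R 1) (\<theta>0 + (w * t) *\<^sub>R 1) (pi_v P w irs (\<theta>0 + (w * t) *\<^sub>R 1))
    (pi_it P w irs (\<theta>0 + (w * t) *\<^sub>R 1)) irs (pi_is P w irs (\<theta>0 + (w * t) *\<^sub>R 1))"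
proof -
  have "torus_eq (\<theta>0 + (w * t) *\<^sub>R 1) ((c + w * t) *\<^sub>R 1 + \<theta>dq)"
    using torus_eq_add[OF assms(2), of "(w * t) *\<^sub>R 1"] by (simp add: algebra_simps)
  then show ?thesis
    by (auto simp: in_Gamma_iff[OF assms(1)])
qed

lemma solution_in_Gamma_exists:
  fixes P :: "('n::finite, 'm::finite) mparams"
  assumes vp: "valid_params P" and w: "0 < w"
    and ur: "ur = diagm (pRr P) *v irs"
    and um: "um = (diagm (pD P) + Knet P w irs \<theta>dq) *v (w *\<^sub>R 1)"
    and flux: "flux_ok P \<theta>0 ir0 is0 lr0 ls0" and Gamma: "in_Gamma P w irs \<theta>dq om0 \<theta>0 v0 it0 ir0 is0"
  shows "\<exists>om th lr ls v it ir is.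
    is_solution P (um, ur) {0..} om th lr ls v it ir is \<and>
    om 0 = om0 \<and> th 0 = \<theta>0 \<and> lr 0 = lr0 \<and> ls 0 = ls0 \<and> v 0 = v0 \<and> it 0 = it0 \<and>
    (\<forall>t\<ge>0. in_Gamma P w irs \<theta>dq (om t) (th t) (v t) (it t) (ir t) (is t))"
proof -
  obtain c where fibre: "torus_eq \<theta>0 (c *\<^sub>R 1 + \<theta>dq)"
    using Gamma by (auto simp: in_Gamma_iff[OF w])
  have initial: "ir0 = irs" "om0 = w *\<^sub>R 1" "is0 = pi_is P w irs \<theta>0" "v0 = pi_v P w irs \<theta>0"
    "it0 = pi_it P w irs \<theta>0" "lr0 = rotor_flux P \<theta>0 ir0 is0" "ls0 = stator_flux P \<theta>0 ir0 is0"
    using Gamma flux by (auto simp: in_Gamma_iff[OF w] flux_ok_iff)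
  show ?thesis
    by (intro exI conjI, rule fibre_trajectory_is_solution[OF vp fibre ur um])
      (use initial fibre_trajectory_in_Gamma[OF w fibre, of P irs] in auto)
qed

lemma has_vector_derivative_const_on:
  assumes "\<And>s. s \<in> S \<Longrightarrow> f s = k" and "t \<in> S"
  shows "(f has_vector_derivative 0) (at t within S)"
  by (rule has_vector_derivative_transform[where f="\<lambda>t. k"]) (use assms in auto)

lemma control_eq_if_solution_in_Gamma:
  fixes P :: "('n::finite, 'm::finite) mparams"
  assumes vp: "valid_params P" and w: "0 < w"
    and sol: "is_solution P (um, ur) {0..} om \<theta> lr ls v it ir is"
    and Gamma: "\<forall>t\<ge>0. in_Gamma P w irs \<theta>dq (om t) (\<theta> t) (v t) (it t) (ir t) (is t)"
  shows "ur = diagm (pRr P) *v irs \<and> um = (diagm (pD P) + Knet P w irs \<theta>dq) *v (w *\<^sub>R 1)"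
proof -
  have ir: "ir t = irs" and om: "om t = w *\<^sub>R 1" and is_t: "is t = pi_is P w irs (\<theta> t)"
    and fibre: "\<exists>c. torus_eq (\<theta> t) (c *\<^sub>R 1 + \<theta>dq)" if "t \<in> {0..}" for t
    using Gamma that by (auto simp: in_Gamma_iff[OF w])
  have lr: "lr t = rotor_flux P \<theta>dq irs (pi_is P w irs \<theta>dq)" if "t \<in> {0..}" for t
    using sol that fibre[OF that] rotor_flux_on_fibre[OF vp]
    by (auto simp: is_solution_def flux_ok_iff ir is_t)
  have at_1: "at (1::real) within {0..} \<noteq> bot"
    by (metis at_within_interior interior_real_atLeast greaterThan_iff zero_less_one at_neq_bot)
  have one: "1 \<in> {0::real..}"
    by simp
  have "(lr has_vector_derivative (- (diagm (pRr P) *v ir 1) + ur)) (at 1 within {0..})"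
    and "((\<lambda>s. diagm (pM P) *v om s) has_vector_derivative
      (- (diagm (pD P) *v om 1) - tau_e P (\<theta> 1) (ir 1) (is 1) + um)) (at 1 within {0..})"
    using sol one by (auto simp: is_solution_def)
  moreover have "(lr has_vector_derivative 0) (at 1 within {0..})"
    by (rule has_vector_derivative_const_on[where k="rotor_flux P \<theta>dq irs (pi_is P w irs \<theta>dq)"])
      (use lr one in auto)
  moreover have "((\<lambda>s. diagm (pM P) *v om s) has_vector_derivative 0) (at 1 within {0..})"
    by (rule has_vector_derivative_const_on[where k="diagm (pM P) *v (w *\<^sub>R 1)"]) (auto simp: om)
  ultimately have "- (diagm (pRr P) *v ir 1) + ur = 0"
    and "- (diagm (pD P) *v om 1) - tau_e P (\<theta> 1) (ir 1) (is 1) + um = 0"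
    by (metis vector_derivative_unique_within[OF at_1])+
  moreover have "tau_e P (\<theta> 1) (ir 1) (is 1) = Knet P w irs \<theta>dq *v (w *\<^sub>R 1)"
    using fibre[of 1] tau_e_on_fibre[OF vp] by (auto simp: ir is_t)
  ultimately show ?thesis
    by (simp add: ir om matrix_vector_mult_add_rdistrib algebra_simps eq_neg_iff_add_eq_0)
qed

lemma renders_invariant_imp_control:
  fixes P :: "('n::finite, 'm::finite) mparams"
  assumes vp: "valid_params P" and w: "0 < w"
    and inv: "renders_invariant P w irs \<theta>dq (um, ur)"
  shows "ur = diagm (pRr P) *v irs \<and> um = (diagm (pD P) + Knet P w irs \<theta>dq) *v (w *\<^sub>R 1)"
proof -
  let ?is = "pi_is P w irs \<theta>dq"
  have "flux_ok P \<theta>dq irs ?is (rotor_flux P \<theta>dq irs ?is) (stator_flux P \<theta>dq irs ?is)"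
    by (simp add: flux_ok_iff)
  moreover have "in_Gamma P w irs \<theta>dq (w *\<^sub>R 1) \<theta>dq (pi_v P w irs \<theta>dq) (pi_it P w irs \<theta>dq) irs ?is"
    using fibre_trajectory_in_Gamma[OF w, of \<theta>dq 0 \<theta>dq P irs 0] by (simp add: torus_eq_def)
  moreover have "\<forall>om0 th0 lr0 ls0 v0 it0 ir0 is0.
      flux_ok P th0 ir0 is0 lr0 ls0 \<and> in_Gamma P w irs \<theta>dq om0 th0 v0 it0 ir0 is0 \<longrightarrow>
      (\<exists>om th lr ls v it ir is. is_solution P (um, ur) {0..} om th lr ls v it ir is \<and>
         om 0 = om0 \<and> th 0 = th0 \<and> lr 0 = lr0 \<and> ls 0 = ls0 \<and> v 0 = v0 \<and> it 0 = it0 \<and>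
         (\<forall>t\<ge>0. in_Gamma P w irs \<theta>dq (om t) (th t) (v t) (it t) (ir t) (is t)))"
    using inv unfolding renders_invariant_def by (rule conjunct1)
  ultimately obtain om \<theta> lr ls v it ir "is" where
      "is_solution P (um, ur) {0..} om \<theta> lr ls v it ir is"
      and "\<forall>t\<ge>0. in_Gamma P w irs \<theta>dq (om t) (\<theta> t) (v t) (it t) (ir t) (is t)"
    by meson
  then show ?thesis
    by (rule control_eq_if_solution_in_Gamma[OF vp w])
qed

section \<open>Currents as functions of the fluxes\<close>

lemma norm_transpose_blkrot: "norm (transpose (blkrot \<theta>) *v x) = norm x"
proof -
  have "inner (transpose (blkrot \<theta>) *v x) (transpose (blkrot \<theta>) *v x) = inner x x"
    by (simp add: inner_matrix_vector_mult_transpose matrix_vector_mul_assoc blkrot_transpose_blkrot)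
  then show ?thesis
    by (simp add: norm_eq_sqrt_inner)
qed

lemma inner_kron_diagm_I2_transpose_blkrot:
  "inner x (kron (diagm d) I2 *v x) = inner y (kron (diagm d) I2 *v y)"
  if "y = transpose (blkrot \<theta>) *v x"
proof -
  have "blkrot \<theta> ** kron (diagm d) I2 = kron (diagm d) I2 ** blkrot \<theta>"
    by (simp add: kron_diagm_I2_eq_blkdiag blkrot_eq_blkdiag blkdiag_mult matrix_scalar_ac
        scalar_matrix_assoc[symmetric])
  then have "blkrot \<theta> *v (kron (diagm d) I2 *v y) = kron (diagm d) I2 *v (blkrot \<theta> *v y)"
    by (simp add: matrix_vector_mul_assoc)
  also have "blkrot \<theta> *v y = x"
    using that by (simp add: matrix_vector_mul_assoc blkrot_transpose_blkrot)
  finally have "blkrot \<theta> *v (kron (diagm d) I2 *v y) = kron (diagm d) I2 *v x" .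
  moreover have "inner x (blkrot \<theta> *v (kron (diagm d) I2 *v y)) = inner y (kron (diagm d) I2 *v y)"
    using that by (simp add: inner_matrix_vector_mult_transpose)
  ultimately show ?thesis
    by simp
qed

lemma kron_row_diagm_eq_transpose: "kron_row (diagm d) v = transpose (kron_col (diagm d) v)"
  by (simp add: kron_row_def kron_col_def transpose_def diagm_def vec_eq_iff)

lemma inner_fluxes:
  assumes "y = transpose (blkrot \<theta>) *v is"
  shows "inner (ir, is) (rotor_flux P \<theta> ir is, stator_flux P \<theta> ir is)
    = (\<Sum>i\<in>UNIV. pLr P $ i * (ir $ i)\<^sup>2 + 2 * pLm P $ i * ir $ i * y $ (i, 1)
        + pLs P $ i * ((y $ (i, 1))\<^sup>2 + (y $ (i, 2))\<^sup>2))"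
proof -
  let ?K = "kron_col (diagm (pLm P)) e1"
  have "inner ir (rotor_flux P \<theta> ir is) = inner ir (diagm (pLr P) *v ir) + inner (?K *v ir) y"
    using assms by (simp add: rotor_flux_def inner_add_right kron_row_diagm_eq_transpose
        inner_matrix_vector_mult_transpose[of ir])
  moreover have "inner is (stator_flux P \<theta> ir is) = inner y (LsM P *v y) + inner y (?K *v ir)"
    using assms inner_kron_diagm_I2_transpose_blkrot[OF assms, of "pLs P"]
    by (simp add: stator_flux_def LsM_def inner_add_right inner_matrix_vector_mult_transpose[of "is"])
  ultimately have "inner (ir, is) (rotor_flux P \<theta> ir is, stator_flux P \<theta> ir is)
      = inner ir (diagm (pLr P) *v ir) + 2 * inner (?K *v ir) y + inner y (LsM P *v y)"
    by (simp add: inner_commute[of y])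
  also have "\<dots> = (\<Sum>i\<in>UNIV. pLr P $ i * (ir $ i)\<^sup>2 + 2 * pLm P $ i * ir $ i * y $ (i, 1)
        + pLs P $ i * ((y $ (i, 1))\<^sup>2 + (y $ (i, 2))\<^sup>2))"
    by (simp add: inner_vec_def sum_UNIV_prod[of "\<lambda>p. _ p * _ p"] sum_2 diagm_matrix_vector_mult
        kron_col_matrix_vector_mult LsM_def kron_diagm_I2_matrix_vector_mult e1_def sum.distrib
        sum_distrib_left power2_eq_square algebra_simps)
  finally show ?thesis .
qed

lemma binary_quadratic_form_nonneg:
  fixes p q r a b :: real
  assumes "0 < p" and "r\<^sup>2 \<le> p * q"
  shows "0 \<le> p * a\<^sup>2 + 2 * r * a * b + q * b\<^sup>2"
proof -
  have "p * (p * a\<^sup>2 + 2 * r * a * b + q * b\<^sup>2) = (p * a + r * b)\<^sup>2 + (p * q - r\<^sup>2) * b\<^sup>2"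
    by (simp add: power2_eq_square algebra_simps)
  also have "0 \<le> \<dots>"
    using assms(2) by simp
  finally show ?thesis
    using assms(1) by (simp add: zero_le_mult_iff)
qed

text \<open>\<open>det / trace\<close> bounds the smallest eigenvalue of the inductance matrix
  \<open>[[Lr, Lm], [Lm, Ls]]\<close> from below; \<open>a\<close> is the rotor current and \<open>(b, e)\<close> the stator current
  in rotor coordinates.\<close>
lemma inductance_form_lower_bound:
  fixes Lr Ls Lm a b e :: real
  assumes "0 < Lr" and "0 < Ls" and "0 < Ls * Lr - Lm\<^sup>2"
  shows "(Ls * Lr - Lm\<^sup>2) / (Lr + Ls) * (a\<^sup>2 + b\<^sup>2 + e\<^sup>2)
    \<le> Lr * a\<^sup>2 + 2 * Lm * a * b + Ls * (b\<^sup>2 + e\<^sup>2)"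
proof -
  define c where "c = (Ls * Lr - Lm\<^sup>2) / (Lr + Ls)"
  have c: "c * (Lr + Ls) = Ls * Lr - Lm\<^sup>2"
    using assms by (simp add: c_def)
  have "c < Lr" and "c < Ls"
    using assms by (simp_all add: c_def field_simps power2_eq_square add_nonneg_pos)
  moreover have "Lm\<^sup>2 \<le> (Lr - c) * (Ls - c)"
    using c by (simp add: algebra_simps power2_eq_square)
  ultimately have "0 \<le> (Lr - c) * a\<^sup>2 + 2 * Lm * a * b + (Ls - c) * b\<^sup>2" and "0 \<le> (Ls - c) * e\<^sup>2"
    by (auto intro: binary_quadratic_form_nonneg)
  then show ?thesis
    unfolding c_def[symmetric] by (simp add: algebra_simps)
qed

lemma inductance_form_lower_bound_uniform:
  assumes "valid_params P"
  obtains c where "0 < c"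
    and "\<And>i a b e. c * (a\<^sup>2 + b\<^sup>2 + e\<^sup>2) \<le> pLr P $ i * a\<^sup>2 + 2 * pLm P $ i * a * b + pLs P $ i * (b\<^sup>2 + e\<^sup>2)"
proof
  define c where "c = Min (range (\<lambda>i. (pLs P $ i * pLr P $ i - (pLm P $ i)\<^sup>2) / (pLr P $ i + pLs P $ i)))"
  have "c \<in> range (\<lambda>i. (pLs P $ i * pLr P $ i - (pLm P $ i)\<^sup>2) / (pLr P $ i + pLs P $ i))"
    unfolding c_def by (rule Min_in) auto
  then show "0 < c"
    using valid_params_pos[OF assms] by (auto intro!: divide_pos_pos add_pos_pos)
  fix i a b e
  have "c \<le> (pLs P $ i * pLr P $ i - (pLm P $ i)\<^sup>2) / (pLr P $ i + pLs P $ i)"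
    unfolding c_def by (rule Min_le) auto
  then have "c * (a\<^sup>2 + b\<^sup>2 + e\<^sup>2)
      \<le> (pLs P $ i * pLr P $ i - (pLm P $ i)\<^sup>2) / (pLr P $ i + pLs P $ i) * (a\<^sup>2 + b\<^sup>2 + e\<^sup>2)"
    by (rule mult_right_mono) simp
  also have "\<dots> \<le> pLr P $ i * a\<^sup>2 + 2 * pLm P $ i * a * b + pLs P $ i * (b\<^sup>2 + e\<^sup>2)"
    by (intro inductance_form_lower_bound valid_params_pos[OF assms])
  finally show "c * (a\<^sup>2 + b\<^sup>2 + e\<^sup>2) \<le> pLr P $ i * a\<^sup>2 + 2 * pLm P $ i * a * b + pLs P $ i * (b\<^sup>2 + e\<^sup>2)" .
qed

lemma flux_coercive:
  fixes P :: "('n::finite, 'm::finite) mparams"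
  assumes "valid_params P"
  obtains c where "0 < c"
    and "\<And>\<theta> ir is. c * (norm (ir, is))\<^sup>2 \<le> inner (ir, is) (rotor_flux P \<theta> ir is, stator_flux P \<theta> ir is)"
proof -
  obtain c where "0 < c" and c: "\<And>i a b e. c * (a\<^sup>2 + b\<^sup>2 + e\<^sup>2)
      \<le> pLr P $ i * a\<^sup>2 + 2 * pLm P $ i * a * b + pLs P $ i * (b\<^sup>2 + e\<^sup>2)"
    using inductance_form_lower_bound_uniform[OF assms] by metis
  have "c * (norm (ir, is))\<^sup>2 \<le> inner (ir, is) (rotor_flux P \<theta> ir is, stator_flux P \<theta> ir is)"
    for \<theta> ir and "is" :: "real^('n\<times>2)"
  proof -
    define y where "y = transpose (blkrot \<theta>) *v is"
    have "(norm (ir, is))\<^sup>2 = (norm ir)\<^sup>2 + (norm y)\<^sup>2"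
      by (simp add: norm_Pair y_def norm_transpose_blkrot)
    then have "c * (norm (ir, is))\<^sup>2 = (\<Sum>i\<in>UNIV. c * ((ir $ i)\<^sup>2 + (y $ (i, 1))\<^sup>2 + (y $ (i, 2))\<^sup>2))"
      by (simp only: power2_norm_eq_inner)
        (simp add: inner_vec_def sum_UNIV_prod[of "\<lambda>p. _ p * _ p"] sum_2 sum.distrib sum_distrib_left
          power2_eq_square algebra_simps)
    also have "\<dots> \<le> (\<Sum>i\<in>UNIV. pLr P $ i * (ir $ i)\<^sup>2 + 2 * pLm P $ i * ir $ i * y $ (i, 1)
        + pLs P $ i * ((y $ (i, 1))\<^sup>2 + (y $ (i, 2))\<^sup>2))"
      by (intro sum_mono c)
    also have "\<dots> = inner (ir, is) (rotor_flux P \<theta> ir is, stator_flux P \<theta> ir is)"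
      by (rule inner_fluxes[symmetric]) (simp add: y_def)
    finally show ?thesis .
  qed
  with \<open>0 < c\<close> show ?thesis
    using that by blast
qed

lemma norm_le_if_coercive:
  fixes x y :: "'a::real_inner"
  assumes "0 < c" and "c * (norm x)\<^sup>2 \<le> inner x y"
  shows "c * norm x \<le> norm y"
proof (cases "x = 0")
  case False
  have "norm x * (c * norm x) \<le> norm x * norm y"
    using assms(2) norm_cauchy_schwarz[of x y] by (simp add: power2_eq_square ac_simps)
  then show ?thesis
    using False by simp
qed simp

lemma currents_le_fluxes:
  fixes P :: "('n::finite, 'm::finite) mparams"
  assumes "valid_params P"
  obtains K where "0 \<le> K"
    and "\<And>\<theta> ir is. norm (ir, is) \<le> K * norm (rotor_flux P \<theta> ir is, stator_flux P \<theta> ir is)"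
proof -
  obtain c where c: "0 < c" and coercive: "\<And>\<theta> (ir :: real^'n) (is :: real^('n\<times>2)).
      c * (norm (ir, is))\<^sup>2 \<le> inner (ir, is) (rotor_flux P \<theta> ir is, stator_flux P \<theta> ir is)"
    using flux_coercive[OF assms] by metis
  have "c * norm (ir, is) \<le> norm (rotor_flux P \<theta> ir is, stator_flux P \<theta> ir is)" for \<theta> ir "is"
    by (rule norm_le_if_coercive[OF c coercive])
  then have "norm (ir, is) \<le> 1 / c * norm (rotor_flux P \<theta> ir is, stator_flux P \<theta> ir is)" for \<theta> ir "is"
    using c by (simp add: field_simps)
  then show ?thesis
    using c that[of "1 / c"] by simp
qed

lemma rotor_flux_diff:
  "rotor_flux P \<theta> ir is - rotor_flux P \<theta> ir' is' = rotor_flux P \<theta> (ir - ir') (is - is')"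
  by (simp add: rotor_flux_def matrix_vector_mult_diff_distrib algebra_simps)

lemma stator_flux_diff:
  "stator_flux P \<theta> ir is - stator_flux P \<theta> ir' is' = stator_flux P \<theta> (ir - ir') (is - is')"
  by (simp add: stator_flux_def matrix_vector_mult_diff_distrib algebra_simps)

lemma currents_unique:
  fixes P :: "('n::finite, 'm::finite) mparams"
  assumes "valid_params P" and "flux_ok P \<theta> ir is lr ls" and "flux_ok P \<theta> ir' is' lr ls"
  shows "ir = ir'" and "is = is'"
proof -
  obtain K where "0 \<le> K" and "\<And>\<theta> (ir :: real^'n) (is :: real^('n\<times>2)).
      norm (ir, is) \<le> K * norm (rotor_flux P \<theta> ir is, stator_flux P \<theta> ir is)"
    using currents_le_fluxes[OF assms(1)] by metis
  moreover have "rotor_flux P \<theta> (ir - ir') (is - is') = 0" and "stator_flux P \<theta> (ir - ir') (is - is') = 0"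
    using assms(2,3) by (simp_all add: flux_ok_iff flip: rotor_flux_diff stator_flux_diff)
  ultimately have "norm (ir - ir', is - is') \<le> 0"
    by (metis mult_zero_right norm_zero zero_prod_def)
  then show "ir = ir'" and "is = is'"
    by (auto simp: zero_prod_def)
qed

lemma bounded_currents:
  fixes P :: "('n::finite, 'm::finite) mparams"
  assumes "valid_params P" and "\<And>t. t \<in> S \<Longrightarrow> flux_ok P (\<theta> t) (ir t) (is t) (lr t) (ls t)"
    and "bounded (lr ` S)" and "bounded (ls ` S)"
  shows "bounded (ir ` S)" and "bounded (is ` S)"
proof -
  obtain K where "0 \<le> K" and K: "\<And>\<theta> (ir :: real^'n) (is :: real^('n\<times>2)).
      norm (ir, is) \<le> K * norm (rotor_flux P \<theta> ir is, stator_flux P \<theta> ir is)"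
    using currents_le_fluxes[OF assms(1)] by metis
  obtain B1 B2 where B1: "\<And>t. t \<in> S \<Longrightarrow> norm (lr t) \<le> B1" and B2: "\<And>t. t \<in> S \<Longrightarrow> norm (ls t) \<le> B2"
    using assms(3,4) by (auto simp: bounded_iff)
  have "norm (ir t, is t) \<le> K * (B1 + B2)" if "t \<in> S" for t
  proof -
    have "norm (ir t, is t) \<le> K * norm (lr t, ls t)"
      using K[of "ir t" "is t" "\<theta> t"] assms(2)[OF that] by (simp add: flux_ok_iff)
    also have "\<dots> \<le> K * (B1 + B2)"
      using B1[OF that] B2[OF that] norm_Pair_le[of "lr t" "ls t"] \<open>0 \<le> K\<close>
      by (intro mult_left_mono) auto
    finally show ?thesis .
  qed
  then show "bounded (ir ` S)" and "bounded (is ` S)"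
    unfolding bounded_iff by (metis image_iff norm_fst_le norm_snd_le order_trans)+
qed

section \<open>Lipschitz estimates along pairs of trajectories\<close>

definition dominated_on :: "'a set \<Rightarrow> ('a \<Rightarrow> real) \<Rightarrow> ('a \<Rightarrow> 'b::real_normed_vector) \<Rightarrow> bool" where
  "dominated_on S N f \<longleftrightarrow> (\<exists>K. \<forall>t\<in>S. norm (f t) \<le> K * N t)"

lemma dominated_on_norm: "dominated_on S (\<lambda>t. norm (f t)) f"
  unfolding dominated_on_def by (auto intro: exI[of _ 1])

lemma dominated_on_eq:
  "dominated_on S N g \<Longrightarrow> (\<And>t. t \<in> S \<Longrightarrow> f t = g t) \<Longrightarrow> dominated_on S N f"
  by (simp add: dominated_on_def)

lemma dominated_on_le:
  assumes "dominated_on S N g" and "0 \<le> K" and "\<And>t. t \<in> S \<Longrightarrow> norm (f t) \<le> K * norm (g t)"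
  shows "dominated_on S N f"
proof -
  obtain L where "\<forall>t\<in>S. norm (g t) \<le> L * N t"
    using assms(1) by (auto simp: dominated_on_def)
  then have "\<forall>t\<in>S. norm (f t) \<le> (K * L) * N t"
    using assms(2,3) by (metis mult.assoc mult_left_mono order_trans)
  then show ?thesis
    unfolding dominated_on_def by blast
qed

lemma dominated_on_zero: "dominated_on S N (\<lambda>t. 0)"
  unfolding dominated_on_def by (auto intro: exI[of _ 0])

lemma dominated_on_diff_self: "dominated_on S N (\<lambda>t. x t - x t)"
  by (simp add: dominated_on_zero)

lemma dominated_on_add:
  assumes "dominated_on S N f" and "dominated_on S N g"
  shows "dominated_on S N (\<lambda>t. f t + g t)"
proof -
  obtain K L where "\<forall>t\<in>S. norm (f t) \<le> K * N t" and "\<forall>t\<in>S. norm (g t) \<le> L * N t"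
    using assms by (auto simp: dominated_on_def)
  then have "\<forall>t\<in>S. norm (f t + g t) \<le> (K + L) * N t"
    by (auto simp: distrib_right intro: norm_triangle_le add_mono)
  then show ?thesis
    unfolding dominated_on_def by blast
qed

lemma dominated_on_bounded_linear:
  assumes "bounded_linear h" and "dominated_on S N f"
  shows "dominated_on S N (\<lambda>t. h (f t))"
proof -
  obtain K where "0 \<le> K" and "\<And>x. norm (h x) \<le> K * norm x"
    using bounded_linear.nonneg_bounded[OF assms(1)] by (auto simp: ac_simps)
  then show ?thesis
    by (intro dominated_on_le[OF assms(2)])
qed

lemma dominated_on_uminus: "dominated_on S N f \<Longrightarrow> dominated_on S N (\<lambda>t. - f t)"
  using dominated_on_bounded_linear[OF bounded_linear_minus[OF bounded_linear_ident]] by blast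

lemma dominated_on_diff:
  "dominated_on S N f \<Longrightarrow> dominated_on S N g \<Longrightarrow> dominated_on S N (\<lambda>t. f t - g t)"
  using dominated_on_add[OF _ dominated_on_uminus, of S N f g] by simp

lemma dominated_on_matrix_vector_mult:
  "dominated_on S N f \<Longrightarrow> dominated_on S N (\<lambda>t. A *v f t)" for A :: "real^'n^'m"
  by (rule dominated_on_bounded_linear[OF matrix_vector_mul_bounded_linear])

lemma dominated_on_matrix_cancel:
  fixes A :: "real^'n^'n"
  assumes "invertible A" and "dominated_on S N (\<lambda>t. A *v x1 t - A *v x2 t)"
  shows "dominated_on S N (\<lambda>t. x1 t - x2 t)"
  using dominated_on_matrix_vector_mult[OF assms(2), of "matrix_inv A"]
  by (simp add: matrix_vector_mult_diff_distrib matrix_vector_mul_assoc matrix_inv_left[OF assms(1)])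

lemma dominated_on_Pair:
  assumes "dominated_on S N f" and "dominated_on S N g"
  shows "dominated_on S N (\<lambda>t. (f t, g t))"
proof -
  have "dominated_on S N (\<lambda>t. (f t, 0) + (0, g t))"
    using assms by (intro dominated_on_add dominated_on_bounded_linear[OF bounded_linear_Pair]
        bounded_linear_ident bounded_linear_zero)
  then show ?thesis
    by simp
qed

lemma dominated_on_Pair_iff:
  "dominated_on S N (\<lambda>t. (f t, g t)) \<longleftrightarrow> dominated_on S N f \<and> dominated_on S N g"
  using dominated_on_bounded_linear[OF bounded_linear_fst] dominated_on_bounded_linear[OF bounded_linear_snd]
  by (fastforce intro: dominated_on_Pair)

lemma dominated_on_bounded_bilinear:
  assumes "bounded_bilinear b"
    and "dominated_on S N (\<lambda>t. x1 t - x2 t)" and "dominated_on S N (\<lambda>t. y1 t - y2 t)"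
    and "bounded (y1 ` S)" and "bounded (x2 ` S)"
  shows "dominated_on S N (\<lambda>t. b (x1 t) (y1 t) - b (x2 t) (y2 t))"
proof -
  interpret b: bounded_bilinear b by fact
  obtain K where K: "0 < K" "\<And>x y. norm (b x y) \<le> norm x * norm y * K"
    using b.pos_bounded by blast
  obtain B1 B2 where B1: "\<And>t. t \<in> S \<Longrightarrow> norm (y1 t) \<le> B1" and B2: "\<And>t. t \<in> S \<Longrightarrow> norm (x2 t) \<le> B2"
    using assms(4,5) by (auto simp: bounded_iff)
  have "b (x1 t) (y1 t) - b (x2 t) (y2 t) = b (x1 t - x2 t) (y1 t) + b (x2 t) (y1 t - y2 t)" for t
    by (simp add: b.diff_left b.diff_right)
  moreover have bound1: "norm (b u (y1 t)) \<le> (K * max B1 0) * norm u" if "t \<in> S" for u t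
  proof -
    have "norm u * norm (y1 t) * K \<le> norm u * max B1 0 * K"
      using B1[OF that] K(1) by (intro mult_right_mono mult_left_mono) auto
    then show ?thesis
      using K(2)[of u "y1 t"] by (simp add: ac_simps)
  qed
  moreover have bound2: "norm (b (x2 t) u) \<le> (K * max B2 0) * norm u" if "t \<in> S" for u t
  proof -
    have "norm (x2 t) * norm u * K \<le> max B2 0 * norm u * K"
      using B2[OF that] K(1) by (intro mult_right_mono) auto
    then show ?thesis
      using K(2)[of "x2 t" u] by (simp add: ac_simps)
  qed
  moreover have "dominated_on S N (\<lambda>t. b (x1 t - x2 t) (y1 t))"
    by (rule dominated_on_le[OF assms(2), of "K * max B1 0"]) (use K(1) bound1 in auto)
  moreover have "dominated_on S N (\<lambda>t. b (x2 t) (y1 t - y2 t))"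
    by (rule dominated_on_le[OF assms(3), of "K * max B2 0"]) (use K(1) bound2 in auto)
  ultimately show ?thesis
    by (simp add: dominated_on_add)
qed

lemma norm_matrix_vector_mult_le: "norm (A *v x) \<le> norm A * norm x"
  for A :: "real^'n^'m"
proof -
  have "norm ((A *v x) $ i) \<le> norm ((norm x *\<^sub>R (\<chi> i. norm (A $ i))) $ i)" for i
  proof -
    have "(A *v x) $ i = inner (A $ i) x"
      by (simp add: matrix_vector_mult_def inner_vec_def)
    then show ?thesis
      using Cauchy_Schwarz_ineq2[of "A $ i" x] by (simp add: ac_simps)
  qed
  then have "norm (A *v x) \<le> norm (norm x *\<^sub>R (\<chi> i. norm (A $ i)))"
    by (rule norm_le_componentwise_cart)
  moreover have "norm (\<chi> i. norm (A $ i)) = norm A"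
    unfolding norm_vec_def[of A] norm_vec_def[of "\<chi> i. norm (A $ i)"] by simp
  ultimately show ?thesis
    by (simp add: ac_simps)
qed

lemma bounded_bilinear_matrix_vector_mult: "bounded_bilinear ((*v) :: real^'n^'m \<Rightarrow> _)"
  by unfold_locales
    (auto simp: matrix_vector_mult_add_rdistrib matrix_vector_right_distrib matrix_vector_mult_scaleR_left
      matrix_vector_mult_scaleR intro!: exI[of _ 1] norm_matrix_vector_mult_le)

lemma bounded_bilinear_diagm: "bounded_bilinear (\<lambda>d x. diagm d *v x)"
proof -
  have "linear diagm"
    by (auto simp: linear_iff diagm_def vec_eq_iff)
  then show ?thesis
    using bounded_bilinear.comp1[OF bounded_bilinear_matrix_vector_mult, of diagm]
    by (simp add: linear_conv_bounded_linear)
qed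

lemma abs_sin_diff_le: "\<bar>sin a - sin b\<bar> \<le> \<bar>a - b\<bar>" for a b :: real
proof -
  have "\<bar>sin a - sin b\<bar> = 2 * \<bar>sin ((a - b) / 2)\<bar> * \<bar>cos ((a + b) / 2)\<bar>"
    by (simp add: sin_diff_sin abs_mult)
  also have "\<dots> \<le> 2 * \<bar>(a - b) / 2\<bar> * 1"
    by (intro mult_mono abs_sin_x_le_abs_x) auto
  finally show ?thesis
    by simp
qed

lemma abs_cos_diff_le: "\<bar>cos a - cos b\<bar> \<le> \<bar>a - b\<bar>" for a b :: real
proof -
  have "\<bar>cos a - cos b\<bar> = 2 * \<bar>sin ((a + b) / 2)\<bar> * \<bar>sin ((b - a) / 2)\<bar>"
    by (simp add: cos_diff_cos abs_mult)
  also have "\<dots> \<le> 2 * 1 * \<bar>(b - a) / 2\<bar>"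
    by (intro mult_mono abs_sin_x_le_abs_x) auto
  finally show ?thesis
    by simp
qed

lemma norm_matrix_le_entries:
  fixes A :: "real^'n^'m"
  assumes "\<And>i j. \<bar>A $ i $ j\<bar> \<le> c"
  shows "norm A \<le> of_nat (CARD('m) * CARD('n)) * c"
proof -
  have "norm A \<le> (\<Sum>i\<in>UNIV. norm (A $ i))"
    by (simp add: norm_vec_def L2_set_le_sum)
  also have "\<dots> \<le> (\<Sum>i\<in>UNIV. \<Sum>j\<in>UNIV. \<bar>A $ i $ j\<bar>)"
    by (intro sum_mono norm_le_l1_cart)
  also have "\<dots> \<le> (\<Sum>i\<in>(UNIV::'m set). \<Sum>j\<in>(UNIV::'n set). c)"
    by (intro sum_mono assms)
  finally show ?thesis
    by simp
qed

lemma norm_blkrot_diff_le: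
  "norm (blkrot a - blkrot b) \<le> of_nat (CARD('n \<times> 2) * CARD('n \<times> 2)) * norm (a - b)"
  for a b :: "real^'n::finite"
proof (rule norm_matrix_le_entries)
  fix p q :: "'n \<times> 2"
  have "\<bar>rot s $ i $ j - rot t $ i $ j\<bar> \<le> \<bar>s - t\<bar>" for s t and i j :: 2
    using exhaust_2[of i] exhaust_2[of j] abs_sin_diff_le[of s t] abs_sin_diff_le[of t s]
      abs_cos_diff_le[of s t] by (auto simp: rot_def abs_minus_commute)
  then have "\<bar>(blkrot a - blkrot b) $ p $ q\<bar> \<le> \<bar>(a - b) $ fst p\<bar>"
    by (simp add: blkrot_def)
  also have "\<dots> \<le> norm (a - b)"
    by (rule component_le_norm_cart)
  finally show "\<bar>(blkrot a - blkrot b) $ p $ q\<bar> \<le> norm (a - b)" .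
qed

lemma bounded_range_blkrot: "bounded (range blkrot)"
proof -
  have "\<bar>blkrot \<theta> $ p $ q\<bar> \<le> 1" for \<theta> :: "real^'n" and p q
    using exhaust_2[of "snd p"] exhaust_2[of "snd q"] by (auto simp: blkrot_def rot_def)
  then have "norm (blkrot \<theta>) \<le> of_nat (CARD('n \<times> 2) * CARD('n \<times> 2))" for \<theta> :: "real^'n"
    using norm_matrix_le_entries[of "blkrot \<theta>" 1] by (simp only: mult_1_right) blast
  then show ?thesis
    unfolding bounded_iff by blast
qed

lemma dominated_on_blkrot:
  "dominated_on S N (\<lambda>t. a t - b t) \<Longrightarrow> dominated_on S N (\<lambda>t. blkrot (a t) - blkrot (b t))"
  for a b :: "'a \<Rightarrow> real^'n::finite"
  by (erule dominated_on_le[where K="of_nat (CARD('n \<times> 2) * CARD('n \<times> 2))"])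
    (simp_all only: of_nat_0_le_iff norm_blkrot_diff_le)

lemma dominated_on_blkrot_mult:
  assumes "dominated_on S N (\<lambda>t. \<theta>1 t - \<theta>2 t)" and "dominated_on S N (\<lambda>t. x1 t - x2 t)"
    and "bounded (x1 ` S)"
  shows "dominated_on S N (\<lambda>t. blkrot (\<theta>1 t) *v x1 t - blkrot (\<theta>2 t) *v x2 t)"
  by (rule dominated_on_bounded_bilinear[OF bounded_bilinear_matrix_vector_mult
        dominated_on_blkrot[OF assms(1)] assms(2,3)])
    (auto intro: bounded_subset[OF bounded_range_blkrot])

lemma dominated_on_transpose_blkrot_mult:
  assumes "dominated_on S N (\<lambda>t. \<theta>1 t - \<theta>2 t)" and "dominated_on S N (\<lambda>t. x1 t - x2 t)"
    and "bounded (x1 ` S)"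
  shows "dominated_on S N (\<lambda>t. transpose (blkrot (\<theta>1 t)) *v x1 t - transpose (blkrot (\<theta>2 t)) *v x2 t)"
proof -
  have "dominated_on S N (\<lambda>t. - \<theta>1 t - - \<theta>2 t)"
    by (rule dominated_on_eq[OF dominated_on_uminus[OF assms(1)]]) simp
  then show ?thesis
    unfolding transpose_blkrot by (rule dominated_on_blkrot_mult[OF _ assms(2,3)])
qed

lemma dominated_on_currents:
  fixes P :: "('n::finite, 'm::finite) mparams"
  assumes vp: "valid_params P"
    and flux1: "\<And>t. t \<in> S \<Longrightarrow> flux_ok P (\<theta>1 t) (ir1 t) (is1 t) (lr1 t) (ls1 t)"
    and flux2: "\<And>t. t \<in> S \<Longrightarrow> flux_ok P (\<theta>2 t) (ir2 t) (is2 t) (lr2 t) (ls2 t)"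
    and "dominated_on S N (\<lambda>t. \<theta>1 t - \<theta>2 t)"
    and "dominated_on S N (\<lambda>t. lr1 t - lr2 t)" and "dominated_on S N (\<lambda>t. ls1 t - ls2 t)"
    and "bounded (ir2 ` S)" and "bounded (is2 ` S)"
  shows "dominated_on S N (\<lambda>t. (ir1 t - ir2 t, is1 t - is2 t))"
proof -
  let ?K1 = "kron_col (diagm (pLm P)) e1"
  obtain K where "0 \<le> K" and K: "\<And>\<theta> (ir :: real^'n) (is :: real^('n\<times>2)).
      norm (ir, is) \<le> K * norm (rotor_flux P \<theta> ir is, stator_flux P \<theta> ir is)"
    using currents_le_fluxes[OF vp] by metis
  have fluxes: "rotor_flux P (\<theta>1 t) (ir1 t - ir2 t) (is1 t - is2 t) = (lr1 t - lr2 t)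
      - kron_row (diagm (pLm P)) e1 *v (transpose (blkrot (\<theta>1 t)) *v is2 t - transpose (blkrot (\<theta>2 t)) *v is2 t)"
      "stator_flux P (\<theta>1 t) (ir1 t - ir2 t) (is1 t - is2 t) = (ls1 t - ls2 t)
      - (blkrot (\<theta>1 t) *v (?K1 *v ir2 t) - blkrot (\<theta>2 t) *v (?K1 *v ir2 t))" if "t \<in> S" for t
    using flux1[OF that] flux2[OF that]
    by (simp_all add: flux_ok_iff flip: rotor_flux_diff stator_flux_diff)
      (simp_all add: rotor_flux_def stator_flux_def matrix_vector_mult_diff_distrib algebra_simps)
  have "bounded ((\<lambda>t. ?K1 *v ir2 t) ` S)"
    using bounded_linear_image[OF assms(7) matrix_vector_mul_bounded_linear[of ?K1]]
    by (simp add: image_image)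
  then have "dominated_on S N (\<lambda>t. ((lr1 t - lr2 t)
      - kron_row (diagm (pLm P)) e1 *v (transpose (blkrot (\<theta>1 t)) *v is2 t - transpose (blkrot (\<theta>2 t)) *v is2 t),
      (ls1 t - ls2 t) - (blkrot (\<theta>1 t) *v (?K1 *v ir2 t) - blkrot (\<theta>2 t) *v (?K1 *v ir2 t))))"
    by (intro dominated_on_Pair dominated_on_diff dominated_on_matrix_vector_mult assms
        dominated_on_transpose_blkrot_mult dominated_on_blkrot_mult dominated_on_diff_self)
  then have "dominated_on S N (\<lambda>t. (rotor_flux P (\<theta>1 t) (ir1 t - ir2 t) (is1 t - is2 t),
      stator_flux P (\<theta>1 t) (ir1 t - ir2 t) (is1 t - is2 t)))"
    by (rule dominated_on_eq) (simp add: fluxes)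
  then show ?thesis
    by (rule dominated_on_le[OF _ \<open>0 \<le> K\<close> K])
qed

lemma dominated_on_tau_e:
  assumes "dominated_on S N (\<lambda>t. \<theta>1 t - \<theta>2 t)" and "dominated_on S N (\<lambda>t. ir1 t - ir2 t)"
    and "dominated_on S N (\<lambda>t. is1 t - is2 t)" and "bounded (is1 ` S)" and "bounded (ir2 ` S)"
  shows "dominated_on S N (\<lambda>t. tau_e P (\<theta>1 t) (ir1 t) (is1 t) - tau_e P (\<theta>2 t) (ir2 t) (is2 t))"
proof -
  let ?Q = "kron_row (diagm (pLm P)) e2"
  obtain B where B: "\<And>t. t \<in> S \<Longrightarrow> norm (is1 t) \<le> B"
    using assms(4) by (auto simp: bounded_iff)
  have "norm (?Q *v (transpose (blkrot (\<theta>1 t)) *v is1 t)) \<le> norm ?Q * B" if "t \<in> S" for t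
  proof -
    have "norm (?Q *v (transpose (blkrot (\<theta>1 t)) *v is1 t)) \<le> norm ?Q * norm (is1 t)"
      using norm_matrix_vector_mult_le[of ?Q "transpose (blkrot (\<theta>1 t)) *v is1 t"]
      by (simp add: norm_transpose_blkrot)
    also have "\<dots> \<le> norm ?Q * B"
      by (rule mult_left_mono[OF B[OF that] norm_ge_zero])
    finally show ?thesis .
  qed
  then have "bounded ((\<lambda>t. ?Q *v (transpose (blkrot (\<theta>1 t)) *v is1 t)) ` S)"
    unfolding bounded_iff by blast
  moreover have "dominated_on S N (\<lambda>t. ?Q *v (transpose (blkrot (\<theta>1 t)) *v is1 t)
      - ?Q *v (transpose (blkrot (\<theta>2 t)) *v is2 t))"
    unfolding matrix_vector_mult_diff_distrib[symmetric]
    by (intro dominated_on_matrix_vector_mult dominated_on_transpose_blkrot_mult assms)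
  ultimately have "dominated_on S N (\<lambda>t. diagm (ir1 t) *v (?Q *v (transpose (blkrot (\<theta>1 t)) *v is1 t))
      - diagm (ir2 t) *v (?Q *v (transpose (blkrot (\<theta>2 t)) *v is2 t)))"
    by (intro dominated_on_bounded_bilinear[OF bounded_bilinear_diagm] assms)
  then show ?thesis
    unfolding tau_e_def by (rule dominated_on_eq[OF dominated_on_uminus]) simp
qed

definition state_vector :: "('n::finite, 'm::finite) mparams \<Rightarrow> real^'n \<Rightarrow> real^'n \<Rightarrow> real^'n
    \<Rightarrow> real^('n\<times>2) \<Rightarrow> real^('n\<times>2) \<Rightarrow> real^('m\<times>2)
    \<Rightarrow> (real^'n) \<times> (real^'n) \<times> (real^'n) \<times> (real^('n\<times>2)) \<times> (real^('n\<times>2)) \<times> (real^('m\<times>2))" where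
  "state_vector P om \<theta> lr ls v it = (diagm (pM P) *v om, \<theta>, lr, ls, CM P *v v, LtM P *v it)"

definition vector_field :: "('n::finite, 'm::finite) mparams \<Rightarrow> (real^'n) \<times> (real^'n) \<Rightarrow> real^'n \<Rightarrow> real^'n
    \<Rightarrow> real^'n \<Rightarrow> real^('n\<times>2) \<Rightarrow> real^('n\<times>2) \<Rightarrow> real^('m\<times>2)
    \<Rightarrow> (real^'n) \<times> (real^'n) \<times> (real^'n) \<times> (real^('n\<times>2)) \<times> (real^('n\<times>2)) \<times> (real^('m\<times>2))" where
  "vector_field P u om \<theta> ir is v it =
     (- (diagm (pD P) *v om) - tau_e P \<theta> ir is + fst u, om, - (diagm (pRr P) *v ir) + snd u,
      - (RsM P *v is) + v, - (GM P *v v) - EM P *v it - is, - (RtM P *v it) + transpose (EM P) *v v)"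

lemma vector_field_diff:
  "vector_field P u om1 \<theta>1 ir1 is1 v1 it1 - vector_field P u om2 \<theta>2 ir2 is2 v2 it2 =
    (- (diagm (pD P) *v (om1 - om2)) - (tau_e P \<theta>1 ir1 is1 - tau_e P \<theta>2 ir2 is2), om1 - om2,
     - (diagm (pRr P) *v (ir1 - ir2)), - (RsM P *v (is1 - is2)) + (v1 - v2),
     - (GM P *v (v1 - v2)) - EM P *v (it1 - it2) - (is1 - is2),
     - (RtM P *v (it1 - it2)) + transpose (EM P) *v (v1 - v2))"
  by (simp add: vector_field_def matrix_vector_mult_diff_distrib algebra_simps)

lemma vector_field_dominated:
  fixes P :: "('n::finite, 'm::finite) mparams"
  assumes vp: "valid_params P"
    and flux1: "\<And>t. t \<in> S \<Longrightarrow> flux_ok P (\<theta>1 t) (ir1 t) (is1 t) (lr1 t) (ls1 t)"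
    and flux2: "\<And>t. t \<in> S \<Longrightarrow> flux_ok P (\<theta>2 t) (ir2 t) (is2 t) (lr2 t) (ls2 t)"
    and bounded: "bounded (is1 ` S)" "bounded (ir2 ` S)" "bounded (is2 ` S)"
  shows "dominated_on S
    (\<lambda>t. norm (state_vector P (om1 t) (\<theta>1 t) (lr1 t) (ls1 t) (v1 t) (it1 t)
      - state_vector P (om2 t) (\<theta>2 t) (lr2 t) (ls2 t) (v2 t) (it2 t)))
    (\<lambda>t. vector_field P u (om1 t) (\<theta>1 t) (ir1 t) (is1 t) (v1 t) (it1 t)
      - vector_field P u (om2 t) (\<theta>2 t) (ir2 t) (is2 t) (v2 t) (it2 t))"
    (is "dominated_on S ?N _")
proof -
  have "dominated_on S ?N (\<lambda>t. (diagm (pM P) *v om1 t - diagm (pM P) *v om2 t, \<theta>1 t - \<theta>2 t,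
      lr1 t - lr2 t, ls1 t - ls2 t, CM P *v v1 t - CM P *v v2 t, LtM P *v it1 t - LtM P *v it2 t))"
    using dominated_on_norm[of S "\<lambda>t. state_vector P (om1 t) (\<theta>1 t) (lr1 t) (ls1 t) (v1 t) (it1 t)
      - state_vector P (om2 t) (\<theta>2 t) (lr2 t) (ls2 t) (v2 t) (it2 t)"]
    by (simp add: state_vector_def)
  then have Mom: "dominated_on S ?N (\<lambda>t. diagm (pM P) *v om1 t - diagm (pM P) *v om2 t)"
    and \<theta>: "dominated_on S ?N (\<lambda>t. \<theta>1 t - \<theta>2 t)"
    and lr: "dominated_on S ?N (\<lambda>t. lr1 t - lr2 t)" and ls: "dominated_on S ?N (\<lambda>t. ls1 t - ls2 t)"
    and Cv: "dominated_on S ?N (\<lambda>t. CM P *v v1 t - CM P *v v2 t)"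
    and Lit: "dominated_on S ?N (\<lambda>t. LtM P *v it1 t - LtM P *v it2 t)"
    by (simp_all add: dominated_on_Pair_iff)
  have om: "dominated_on S ?N (\<lambda>t. om1 t - om2 t)"
    by (rule dominated_on_matrix_cancel[OF invertible_diagm Mom]) (simp add: valid_params_pos[OF vp])
  have v: "dominated_on S ?N (\<lambda>t. v1 t - v2 t)"
    by (rule dominated_on_matrix_cancel[OF _ Cv])
      (simp add: CM_def invertible_kron_diagm_I2 valid_params_pos[OF vp])
  have it: "dominated_on S ?N (\<lambda>t. it1 t - it2 t)"
    by (rule dominated_on_matrix_cancel[OF _ Lit])
      (simp add: LtM_def invertible_kron_diagm_I2 valid_params_pos[OF vp])
  have "dominated_on S ?N (\<lambda>t. (ir1 t - ir2 t, is1 t - is2 t))"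
    by (rule dominated_on_currents[OF vp flux1 flux2 \<theta> lr ls bounded(2,3)])
  then have ir: "dominated_on S ?N (\<lambda>t. ir1 t - ir2 t)" and is_diff: "dominated_on S ?N (\<lambda>t. is1 t - is2 t)"
    by (simp_all add: dominated_on_Pair_iff)
  show ?thesis
    unfolding vector_field_diff
    by (intro dominated_on_Pair dominated_on_add dominated_on_diff dominated_on_uminus
        dominated_on_matrix_vector_mult dominated_on_tau_e om \<theta> v it ir is_diff bounded(1,2))
qed

section \<open>Uniqueness of solutions\<close>

lemma exp_weighted_inner_self_deriv_nonpos:
  fixes d :: "real \<Rightarrow> 'a::real_inner"
  assumes "(d has_vector_derivative d') (at s)" and "inner (d s) d' \<le> L * inner (d s) (d s)"
  shows "\<exists>y. ((\<lambda>t. exp (- 2 * L * t) * inner (d t) (d t)) has_real_derivative y) (at s) \<and> y \<le> 0"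
proof -
  have "((\<lambda>t. inner (d t) (d t)) has_real_derivative 2 * inner (d s) d') (at s)"
    using bounded_bilinear.has_vector_derivative[OF bounded_bilinear_inner assms(1) assms(1)]
    by (simp add: has_real_derivative_iff_has_vector_derivative inner_commute)
  then have "((\<lambda>t. exp (- 2 * L * t) * inner (d t) (d t)) has_real_derivative
      exp (- 2 * L * s) * (- 2 * L) * inner (d s) (d s) + exp (- 2 * L * s) * (2 * inner (d s) d'))
      (at s)"
    by (auto intro!: derivative_eq_intros)
  moreover have "2 * exp (- 2 * L * s) * (inner (d s) d' - L * inner (d s) (d s)) \<le> 0"
    using assms(2) by (intro mult_nonneg_nonpos) auto
  then have "exp (- 2 * L * s) * (- 2 * L) * inner (d s) (d s) + exp (- 2 * L * s) * (2 * inner (d s) d') \<le> 0"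
    by (simp add: algebra_simps)
  ultimately show ?thesis
    by blast
qed

text \<open>Gronwall's argument: \<open>exp (-2 L t) * |z1 t - z2 t|\<^sup>2\<close> is non-increasing and vanishes at 0.\<close>
lemma dominated_derivatives_imp_eq:
  fixes z1 z2 :: "real \<Rightarrow> 'a::real_inner"
  assumes d1: "\<And>t. t \<in> {0..T} \<Longrightarrow> (z1 has_vector_derivative f1 t) (at t within {0..T})"
    and d2: "\<And>t. t \<in> {0..T} \<Longrightarrow> (z2 has_vector_derivative f2 t) (at t within {0..T})"
    and z0: "z1 0 = z2 0"
    and dom: "dominated_on {0..T} (\<lambda>t. norm (z1 t - z2 t)) (\<lambda>t. f1 t - f2 t)"
    and t: "t \<in> {0..T}"
  shows "z1 t = z2 t"
proof -
  obtain L where L: "\<And>t. t \<in> {0..T} \<Longrightarrow> norm (f1 t - f2 t) \<le> L * norm (z1 t - z2 t)"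
    using dom unfolding dominated_on_def by blast
  define d where "d t = z1 t - z2 t" for t
  define h where "h t = exp (- 2 * L * t) * inner (d t) (d t)" for t
  have dd: "(d has_vector_derivative (f1 t - f2 t)) (at t within {0..T})" if "t \<in> {0..T}" for t
    unfolding d_def using d1[OF that] d2[OF that] by (rule has_vector_derivative_diff)
  have "continuous_on {0..T} d"
    using dd by (rule continuous_on_vector_derivative)
  then have cont: "continuous_on {0..T} h"
    unfolding h_def by (intro continuous_intros)
  have h_deriv: "\<exists>y. (h has_real_derivative y) (at s) \<and> y \<le> 0" if "0 < s" "s < T" for s
  proof -
    have s: "s \<in> {0..T}" and "at s within {0..T} = at s"
      using that by (auto intro: at_within_interior)
    then have deriv: "(d has_vector_derivative (f1 s - f2 s)) (at s)"
      using dd[OF s] by simp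
    have "inner (d s) (f1 s - f2 s) \<le> norm (d s) * norm (f1 s - f2 s)"
      by (rule order_trans[OF abs_ge_self Cauchy_Schwarz_ineq2])
    also have "\<dots> \<le> norm (d s) * (L * norm (d s))"
      using L[OF s] by (intro mult_left_mono) (auto simp: d_def)
    also have "\<dots> = L * inner (d s) (d s)"
      by (simp add: power2_norm_eq_inner[symmetric] power2_eq_square)
    finally show ?thesis
      unfolding h_def by (rule exp_weighted_inner_self_deriv_nonpos[OF deriv])
  qed
  have "h t \<le> h 0"
  proof (cases "t = 0")
    case False
    with t have "0 < t"
      by auto
    then show ?thesis
      using DERIV_nonpos_imp_decreasing_open[of 0 t h] h_deriv t
        continuous_on_subset[OF cont, of "{0..t}"] by auto
  qed simp
  then have "exp (- 2 * L * t) * inner (d t) (d t) \<le> 0"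
    by (simp add: h_def d_def z0)
  then have "inner (d t) (d t) \<le> 0"
    by (simp add: mult_le_0_iff)
  then show ?thesis
    unfolding d_def by (metis eq_iff_diff_eq_0 inner_gt_zero_iff not_le)
qed

lemma bounded_image_if_has_vector_derivative:
  "(\<And>t. t \<in> {a..b} \<Longrightarrow> (f has_vector_derivative f' t) (at t within {a..b})) \<Longrightarrow> bounded (f ` {a..b})"
  for f :: "real \<Rightarrow> 'a::real_normed_vector"
  by (intro compact_imp_bounded compact_continuous_image compact_Icc continuous_on_vector_derivative)

lemma is_solution_has_vector_derivative:
  assumes "is_solution P u S om \<theta> lr ls v it ir is" and "t \<in> S"
  shows "((\<lambda>t. state_vector P (om t) (\<theta> t) (lr t) (ls t) (v t) (it t)) has_vector_derivative
    vector_field P u (om t) (\<theta> t) (ir t) (is t) (v t) (it t)) (at t within S)"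
  using assms unfolding is_solution_def state_vector_def vector_field_def
  by (auto intro!: has_vector_derivative_Pair)

lemma is_solution_bounded_currents:
  fixes P :: "('n::finite, 'm::finite) mparams"
  assumes "valid_params P" and "is_solution P u {a..b} om \<theta> lr ls v it ir is"
  shows "bounded (ir ` {a..b})" and "bounded (is ` {a..b})"
proof -
  have flux: "flux_ok P (\<theta> t) (ir t) (is t) (lr t) (ls t)" if "t \<in> {a..b}" for t
    using assms(2) that by (simp add: is_solution_def)
  have "bounded (lr ` {a..b})" and "bounded (ls ` {a..b})"
    using assms(2) by (auto simp: is_solution_def intro!: bounded_image_if_has_vector_derivative)
  then show "bounded (ir ` {a..b})" and "bounded (is ` {a..b})"
    using bounded_currents[where S="{a..b}" and \<theta>=\<theta> and ir=ir and lr=lr and ls=ls, OF assms(1) flux]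
    by simp_all
qed

lemma state_vector_eq_iff:
  assumes "valid_params P"
  shows "state_vector P om \<theta> lr ls v it = state_vector P om' \<theta>' lr' ls' v' it' \<longleftrightarrow>
    om = om' \<and> \<theta> = \<theta>' \<and> lr = lr' \<and> ls = ls' \<and> v = v' \<and> it = it'"
  using valid_params_pos[OF assms]
  by (simp add: state_vector_def CM_def LtM_def invertible_matrix_vector_mult_eq_iff invertible_diagm
      invertible_kron_diagm_I2)

lemma is_solution_unique:
  fixes P :: "('n::finite, 'm::finite) mparams"
  assumes vp: "valid_params P"
    and sol1: "is_solution P u {0..T} om1 \<theta>1 lr1 ls1 v1 it1 ir1 is1"
    and sol2: "is_solution P u {0..T} om2 \<theta>2 lr2 ls2 v2 it2 ir2 is2"
    and initial: "state_vector P (om1 0) (\<theta>1 0) (lr1 0) (ls1 0) (v1 0) (it1 0)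
      = state_vector P (om2 0) (\<theta>2 0) (lr2 0) (ls2 0) (v2 0) (it2 0)"
    and t: "t \<in> {0..T}"
  shows "om1 t = om2 t \<and> \<theta>1 t = \<theta>2 t \<and> lr1 t = lr2 t \<and> ls1 t = ls2 t \<and> v1 t = v2 t \<and> it1 t = it2 t
    \<and> ir1 t = ir2 t \<and> is1 t = is2 t"
proof -
  have flux1: "flux_ok P (\<theta>1 s) (ir1 s) (is1 s) (lr1 s) (ls1 s)" if "s \<in> {0..T}" for s
    using sol1 that by (simp add: is_solution_def)
  have flux2: "flux_ok P (\<theta>2 s) (ir2 s) (is2 s) (lr2 s) (ls2 s)" if "s \<in> {0..T}" for s
    using sol2 that by (simp add: is_solution_def)
  have "state_vector P (om1 t) (\<theta>1 t) (lr1 t) (ls1 t) (v1 t) (it1 t)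
      = state_vector P (om2 t) (\<theta>2 t) (lr2 t) (ls2 t) (v2 t) (it2 t)"
    by (intro dominated_derivatives_imp_eq[OF is_solution_has_vector_derivative[OF sol1]
          is_solution_has_vector_derivative[OF sol2] initial vector_field_dominated[OF vp flux1 flux2] t]
        is_solution_bounded_currents[OF vp sol1] is_solution_bounded_currents[OF vp sol2])
  then have "om1 t = om2 t \<and> \<theta>1 t = \<theta>2 t \<and> lr1 t = lr2 t \<and> ls1 t = ls2 t \<and> v1 t = v2 t \<and> it1 t = it2 t"
    by (simp add: state_vector_eq_iff[OF vp])
  moreover from this have "ir1 t = ir2 t \<and> is1 t = is2 t"
    using currents_unique[OF vp flux1[OF t]] flux2[OF t] by simp
  ultimately show ?thesis
    by blast
qed

lemma solution_stays_in_Gamma: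
  fixes P :: "('n::finite, 'm::finite) mparams"
  assumes vp: "valid_params P" and w: "0 < w"
    and ur: "ur = diagm (pRr P) *v irs"
    and um: "um = (diagm (pD P) + Knet P w irs \<theta>dq) *v (w *\<^sub>R 1)"
    and sol: "is_solution P (um, ur) {0..T} om \<theta> lr ls v it ir is"
    and Gamma0: "in_Gamma P w irs \<theta>dq (om 0) (\<theta> 0) (v 0) (it 0) (ir 0) (is 0)"
    and t: "t \<in> {0..T}"
  shows "in_Gamma P w irs \<theta>dq (om t) (\<theta> t) (v t) (it t) (ir t) (is t)"
proof -
  obtain c where fibre: "torus_eq (\<theta> 0) (c *\<^sub>R 1 + \<theta>dq)"
    using Gamma0 by (auto simp: in_Gamma_iff[OF w])
  define \<theta>' where "\<theta>' s = \<theta> 0 + (w * s) *\<^sub>R 1" for s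
  define is' where "is' s = pi_is P w irs (\<theta>' s)" for s
  define lr' where "lr' s = rotor_flux P (\<theta>' s) irs (is' s)" for s
  define ls' where "ls' s = stator_flux P (\<theta>' s) irs (is' s)" for s
  have sol': "is_solution P (um, ur) {0..T} (\<lambda>s. w *\<^sub>R 1) \<theta>' lr' ls' (\<lambda>s. pi_v P w irs (\<theta>' s))
      (\<lambda>s. pi_it P w irs (\<theta>' s)) (\<lambda>s. irs) is'"
    unfolding \<theta>'_def[abs_def] is'_def[abs_def] lr'_def[abs_def] ls'_def[abs_def]
    by (rule fibre_trajectory_is_solution[OF vp fibre ur um])
  have "flux_ok P (\<theta> 0) (ir 0) (is 0) (lr 0) (ls 0)"
    using sol t by (simp add: is_solution_def)
  then have "state_vector P (om 0) (\<theta> 0) (lr 0) (ls 0) (v 0) (it 0)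
      = state_vector P (w *\<^sub>R 1) (\<theta>' 0) (lr' 0) (ls' 0) (pi_v P w irs (\<theta>' 0)) (pi_it P w irs (\<theta>' 0))"
    using Gamma0 by (simp add: in_Gamma_iff[OF w] flux_ok_iff \<theta>'_def is'_def lr'_def ls'_def)
  then have "om t = w *\<^sub>R 1" "\<theta> t = \<theta>' t" "v t = pi_v P w irs (\<theta>' t)" "it t = pi_it P w irs (\<theta>' t)"
    "ir t = irs" "is t = is' t"
    using is_solution_unique[OF vp sol sol' _ t] by simp_all
  then show ?thesis
    using fibre_trajectory_in_Gamma[OF w fibre] by (simp add: \<theta>'_def is'_def)
qed

theorem proposition2:
  fixes P :: "('n::finite, 'm::finite) mparams"
    and \<omega>0 :: real and irs \<theta>dq :: "real^'n" and um ur :: "real^'n"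
  assumes "valid_params P" and "\<omega>0 > 0" and "\<forall>i. irs $ i > 0"
  shows "renders_invariant P \<omega>0 irs \<theta>dq (um, ur) \<longleftrightarrow>
           (ur = diagm (pRr P) *v irs \<and>
            um = (diagm (pD P) + Knet P \<omega>0 irs \<theta>dq) *v (\<omega>0 *\<^sub>R 1))"
proof
  assume "renders_invariant P \<omega>0 irs \<theta>dq (um, ur)"
  then show "ur = diagm (pRr P) *v irs \<and> um = (diagm (pD P) + Knet P \<omega>0 irs \<theta>dq) *v (\<omega>0 *\<^sub>R 1)"
    by (rule renders_invariant_imp_control[OF assms(1,2)])
next
  assume "ur = diagm (pRr P) *v irs \<and> um = (diagm (pD P) + Knet P \<omega>0 irs \<theta>dq) *v (\<omega>0 *\<^sub>R 1)"
  then have ur: "ur = diagm (pRr P) *v irs" and um: "um = (diagm (pD P) + Knet P \<omega>0 irs \<theta>dq) *v (\<omega>0 *\<^sub>R 1)"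
    by auto
  show "renders_invariant P \<omega>0 irs \<theta>dq (um, ur)"
    unfolding renders_invariant_def
    using solution_in_Gamma_exists[OF assms(1,2) ur um] solution_stays_in_Gamma[OF assms(1,2) ur um]
    by blast
qed

end
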